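(* Suppose the null hypothesis $H_0: X\perp Y\mid Z$ holds. Assume that $T(\mathbf y,\mathbf a,g(\mathbf Z),h(\mathbf Z))$ has a continuous distribution conditional on $(\mathbf y,g(\mathbf Z),h(\mathbf Z))$ when $\mathbf a\sim\rho^{\star n}(\cdot\mid g(\mathbf Z),h(\mathbf Z))$ is independent of $\mathbf x$ given $(\mathbf y,\mathbf Z)$, and a continuous distribution conditional on $(\mathbf y,\mathbf Z)$ when $\mathbf a$ is drawn from the conditional distribution $f_{\mathbf x\mid\mathbf Z}(\cdot\mid\mathbf Z)$ of $\mathbf x$ given $\mathbf Z$ independently of $\mathbf x$ given $(\mathbf y,\mathbf Z)$. Then for any integer $M\ge1$ and any $\alpha\in(0,1)$, the Maxway CRT $p$-value satisfies $$\mathbb P(p_{\mathrm{maxway}}(\mathbf D)\le\alpha)\le \alpha+2\,\mathbb E[\Delta_x\Delta_y]+\mathbb E[\Delta_{x|g,h}],$$ where $\Delta_x=d_{\mathrm{TV}}\big(\rho^{\star n}(\cdot\mid g(\mathbf Z),h(\mathbf Z)),\,f_{\mathbf x\mid\mathbf Z}(\cdot\mid\mathbf Z)\big)$, $\Delta_y=d_{\mathrm{TV}}\big(f_{\mathbf y\mid\mathbf Z}(\cdot\mid\mathbf Z),\,f_{\mathbf y\mid g(\mathbf Z),h(\mathbf Z)}(\cdot\mid g(\mathbf Z),h(\mathbf Z))\big)$, $\Delta_{x|g,h}=d_{\mathrm{TV}}\big(\rho^{\star n}(\cdot\mid g(\mathbf Z),h(\mathbf Z)),\,\rho^{n}(\cdot\mid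 g(\mathbf Z),h(\mathbf Z))\big)$, and $f_{\mathbf y\mid\mathbf Z}$, $f_{\mathbf y\mid g(\mathbf Z),h(\mathbf Z)}$ denote the conditional distributions of $\mathbf y$ given $\mathbf Z$ and given $(g(\mathbf Z),h(\mathbf Z))$ respectively.
   Context: Let $(Y_i,X_i,Z_i)$, $i=1,\dots,n$, be i.i.d. copies of a random triple $(Y,X,Z)$ with $Y,X\in\mathbb R$, $Z\in\mathbb R^p$; write $\mathbf y=(Y_1,\dots,Y_n)^\top$, $\mathbf x=(X_1,\dots,X_n)^\top$, $\mathbf Z$ the $n\times p$ matrix with rows $Z_i^\top$, and $\mathbf D=(\mathbf y,\mathbf x,\mathbf Z)$. $g,h$ are fixed (non-random) measurable functions of $Z$ with values in finite-dimensional Euclidean spaces, $g(\mathbf Z)=(g(Z_1),\dots,g(Z_n))$, $h(\mathbf Z)=(h(Z_1),\dots,h(Z_n))$. $T(\mathbf y,\mathbf a,g(\mathbf Z),h(\mathbf Z))$ is a fixed measurable real-valued test statistic. $\rho^\star(\cdot\mid g(Z),h(Z))$ is the conditional distribution of $X$ given $(g(Z),h(Z))$ and $\rho^{\star n}(\mathbf x\mid g(\mathbf Z),h(\mathbf Z))=\prod_{i=1}^n\rho^\star(X_i\mid g(Z_i),h(Z_i))$. $\rho(\cdot\mid g(Z),h(Z))$ is a fixed conditional distribution (the "Maxway distribution", an estimate of $\rho^\star$ not depending on $\mathbf D$), and $\rho^{n}(\mathbf x\mid g(\mathbf Z),h(\mathbf Z))=\prod_{i=1}^n\rho(X_i\mid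 g(Z_i),h(Z_i))$. Maxway CRT: conditional on $\mathbf D$, draw $\mathbf x^{(1)},\dots,\mathbf x^{(M)}$ i.i.d. from $\rho^n(\cdot\mid g(\mathbf Z),h(\mathbf Z))$, and set $p_{\mathrm{maxway}}(\mathbf D)=\frac{1}{M+1}\big(1+\sum_{m=1}^M\mathbf 1\{T(\mathbf y,\mathbf x^{(m)},g(\mathbf Z),h(\mathbf Z))\ge T(\mathbf y,\mathbf x,g(\mathbf Z),h(\mathbf Z))\}\big)$. $d_{\mathrm{TV}}$ denotes total variation distance; expectations are over $\mathbf Z$ (and the data). *)

theory Defs
  imports "HOL-Probability.Probability"
begin

definition vec_law :: "nat \<Rightarrow> ('z \<Rightarrow> 'a measure) \<Rightarrow> (nat \<Rightarrow> 'z) \<Rightarrow> (nat \<Rightarrow> 'a) measure" where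
  "vec_law n K zs = PiM {..<n} (\<lambda>i. K (zs i))"

definition vec_space :: "nat \<Rightarrow> 'a measure \<Rightarrow> (nat \<Rightarrow> 'a) measure" where
  "vec_space n M = PiM {..<n} (\<lambda>_. M)"

definition vmap :: "nat \<Rightarrow> ('z \<Rightarrow> 'b) \<Rightarrow> (nat \<Rightarrow> 'z) \<Rightarrow> (nat \<Rightarrow> 'b)" where
  "vmap n g zs = (\<lambda>i\<in>{..<n}. g (zs i))"

definition dTV :: "'a measure \<Rightarrow> 'a measure \<Rightarrow> real" where
  "dTV P Q = (SUP A \<in> sets P. \<bar>measure P A - measure Q A\<bar>)"

text \<open>A probability law on the reals without atoms (continuous distribution).\<close>
definition atomless :: "real measure \<Rightarrow> bool" where
  "atomless P \<longleftrightarrow> (\<forall>t. measure P {t} = 0)"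

text \<open>Maxway CRT p-value: draws m (m < M) are the resampled vectors x^(m).\<close>
definition p_maxway ::
  "nat \<Rightarrow> ((nat \<Rightarrow> real) \<Rightarrow> (nat \<Rightarrow> real) \<Rightarrow> (nat \<Rightarrow> 'g) \<Rightarrow> (nat \<Rightarrow> 'h) \<Rightarrow> real)
   \<Rightarrow> (nat \<Rightarrow> real) \<Rightarrow> (nat \<Rightarrow> real) \<Rightarrow> (nat \<Rightarrow> 'g) \<Rightarrow> (nat \<Rightarrow> 'h)
   \<Rightarrow> (nat \<Rightarrow> nat \<Rightarrow> real) \<Rightarrow> real" where
  "p_maxway M T y x gZ hZ draws =
     (1 + real (card {m \<in> {..<M}. T y (draws m) gZ hZ \<ge> T y x gZ hZ})) / (real M + 1)"

end

theory Submission
  imports Defs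
begin

text \<open>Let \<open>\<Phi>(u, x, y)\<close> be the probability over the resampled vectors that the Maxway p-value is
  at most \<open>\<alpha>\<close>, where \<open>u\<close> is the vector of the \<open>(g(Z_i), h(Z_i))\<close>, and let \<open>a(P, Q)\<close> be the
  mean of \<open>\<Phi>\<close> when \<open>x \<sim> P\<close> and \<open>y \<sim> Q\<close> independently. The left-hand side is the average
  over \<open>Z\<close> of \<open>a(f_x|Z, f_y|Z)\<close>. As \<open>\<Phi>\<close> sees \<open>Z\<close> only through \<open>u\<close>, and \<open>\<rho>*\<close> and
  \<open>f_y|g,h\<close> are the conditional laws given \<open>u\<close>, replacing either true marginal by its
  \<open>u\<close>-conditional counterpart leaves the average unchanged. So the left-hand side exceeds the
  average of \<open>a(\<rho>*\<^sup>n, f_y|g,h)\<close> by the average of a second-order difference, which is at most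
  \<open>2 \<Delta>_x \<Delta>_y\<close> pointwise. Finally \<open>a(\<rho>*\<^sup>n, Q) \<le> a(\<rho>\<^sup>n, Q) + \<Delta>_x|g,h\<close>, and
  \<open>a(\<rho>\<^sup>n, Q) \<le> \<alpha>\<close> since the observed and the resampled vectors are then exchangeable. Ties are
  counted against the observed statistic.\<close>

section \<open>Total variation distance\<close>

lemma measure_diff_le_dTV:
  assumes "prob_space P" "prob_space Q" "A \<in> sets P"
  shows "\<bar>measure P A - measure Q A\<bar> \<le> dTV P Q"
  unfolding dTV_def
proof (rule cSUP_upper[OF assms(3)])
  have "\<bar>measure P B - measure Q B\<bar> \<le> 1" for B
    using prob_space.prob_le_1[OF assms(1), of B] prob_space.prob_le_1[OF assms(2), of B]
      measure_nonneg[of P B] measure_nonneg[of Q B] unfolding abs_le_iff by linarith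
  then show "bdd_above ((\<lambda>A. \<bar>measure P A - measure Q A\<bar>) ` sets P)"
    by (intro bdd_aboveI2)
qed

lemma dTV_nonneg: "prob_space P \<Longrightarrow> prob_space Q \<Longrightarrow> 0 \<le> dTV P Q"
  using measure_diff_le_dTV[OF _ _ sets.empty_sets] by fastforce

lemma dTV_commute: "sets P = sets Q \<Longrightarrow> dTV P Q = dTV Q P"
  unfolding dTV_def by (simp add: abs_minus_commute)

lemma integrable_bounded:
  fixes f :: "'a \<Rightarrow> real"
  assumes "prob_space P" "f \<in> borel_measurable P" "\<And>x. x \<in> space P \<Longrightarrow> \<bar>f x\<bar> \<le> B"
  shows "integrable P f"
proof -
  interpret prob_space P by fact
  show ?thesis using assms(2,3) by (intro integrable_const_bound[where B=B] AE_I2) auto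
qed

lemma integral_unit_interval:
  fixes f :: "'a \<Rightarrow> real"
  assumes "prob_space P" "\<And>x. 0 \<le> f x \<and> f x \<le> 1"
  shows "0 \<le> integral\<^sup>L P f \<and> integral\<^sup>L P f \<le> 1"
proof (cases "integrable P f")
  case True
  then show ?thesis
    using assms by (auto intro!: integral_nonneg prob_space.integral_le_const)
qed (simp add: not_integrable_integral_eq)

text \<open>The staircase \<open>s v = \<lfloor>K v\<rfloor> / K\<close>, written as an average of \<open>K\<close> level indicators.\<close>
lemma staircase_approx:
  fixes v :: real
  assumes "K > 0" "0 \<le> v" "v \<le> 1"
  defines "s \<equiv> (\<Sum>j\<in>{1..K}. if real j / real K \<le> v then 1 else 0) / real K"
  shows "s \<le> v \<and> v \<le> s + 1 / real K"
proof -
  define k where "k = nat \<lfloor>real K * v\<rfloor>"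
  have "real k = of_int \<lfloor>real K * v\<rfloor>"
    using assms(2) by (simp add: k_def)
  then have k: "real k \<le> real K * v" "real K * v < real k + 1"
    by linarith+
  have "real K * v \<le> real K"
    using assms(3) by (simp add: mult_left_le)
  then have "k \<le> K"
    using k(1) by linarith
  have "real j / real K \<le> v \<longleftrightarrow> j \<le> k" for j
    using assms(1,2) by (simp add: divide_le_eq mult.commute k_def le_nat_iff le_floor_iff)
  then have "(\<Sum>j\<in>{1..K}. if real j / real K \<le> v then 1 else 0 :: real)
      = (\<Sum>j\<in>{1..K}. if j \<le> k then 1 else 0)"
    by simp
  also have "\<dots> = real (card ({1..K} \<inter> {j. j \<le> k}))"
    by (simp add: sum.If_cases)
  also have "{1..K} \<inter> {j. j \<le> k} = {1..k}"
    using \<open>k \<le> K\<close> by auto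
  finally have "(\<Sum>j\<in>{1..K}. if real j / real K \<le> v then 1 else 0 :: real) = real k"
    by simp
  then have "s = real k / real K"
    by (simp add: s_def)
  moreover have "real k / real K \<le> v"
    using k(1) assms(1) by (simp add: pos_divide_le_eq mult.commute)
  moreover have "v \<le> real k / real K + 1 / real K"
    using k(2) assms(1) by (simp add: add_divide_distrib[symmetric] pos_le_divide_eq mult.commute)
  ultimately show ?thesis
    by simp
qed

lemma integral_diff_le_dTV:
  fixes f :: "'a \<Rightarrow> real"
  assumes P: "prob_space P" and Q: "prob_space Q" and sets_eq: "sets Q = sets P"
    and f: "f \<in> borel_measurable P" and f01: "\<And>x. x \<in> space P \<Longrightarrow> 0 \<le> f x \<and> f x \<le> 1"
  shows "integral\<^sup>L P f - integral\<^sup>L Q f \<le> dTV P Q"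
proof (rule field_le_epsilon)
  fix e :: real assume "0 < e"
  then obtain K :: nat where K: "K > 0" "1 / real K < e"
    using ex_inverse_of_nat_less by (metis inverse_eq_divide)
  interpret P: prob_space P by fact
  interpret Q: prob_space Q by fact
  have space_eq: "space Q = space P" and fQ: "f \<in> borel_measurable Q"
    using sets_eq_imp_space_eq[OF sets_eq] f measurable_cong_sets[OF sets_eq refl] by auto
  define S where "S j = {x\<in>space P. real j / real K \<le> f x}" for j
  have S: "S j \<in> sets P" for j
    unfolding S_def using f by measurable
  define s where "s x = (\<Sum>j\<in>{1..K}. indicator (S j) x) / real K" for x
  have s_approx: "s x \<le> f x \<and> f x \<le> s x + 1 / real K" if "x \<in> space P" for x
  proof -
    have "s x = (\<Sum>j\<in>{1..K}. if real j / real K \<le> f x then 1 else 0) / real K"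
      unfolding s_def S_def using that by (intro arg_cong2[where f="(/)"] sum.cong) (auto simp: indicator_def)
    then show ?thesis
      using staircase_approx[OF K(1) f01[OF that, THEN conjunct1] f01[OF that, THEN conjunct2]] by simp
  qed
  have integral_s: "integrable M s \<and> integral\<^sup>L M s = (\<Sum>j\<in>{1..K}. measure M (S j)) / real K"
    if "prob_space M" "sets M = sets P" for M
  proof -
    interpret M: prob_space M by fact
    have "integrable M (indicator (S j) :: _ \<Rightarrow> real)" for j
      using S that by (intro integrable_real_indicator) (auto simp: less_top[symmetric])
    then show ?thesis
      unfolding s_def using S that by auto
  qed
  have "integral\<^sup>L P f \<le> integral\<^sup>L P (\<lambda>x. s x + 1 / real K)"
    using s_approx f01 integral_s[OF P refl]
    by (intro integral_mono integrable_bounded[OF P f, of 1]) auto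
  also have "\<dots> = integral\<^sup>L P s + 1 / real K"
    using integral_s[OF P refl] by (simp add: P.prob_space)
  finally have "integral\<^sup>L P f \<le> integral\<^sup>L P s + 1 / real K" .
  moreover have "integral\<^sup>L Q s \<le> integral\<^sup>L Q f"
    using s_approx f01 space_eq integral_s[OF Q sets_eq]
    by (intro integral_mono integrable_bounded[OF Q fQ, of 1]) auto
  moreover have "integral\<^sup>L P s - integral\<^sup>L Q s \<le> dTV P Q"
  proof -
    have "(\<Sum>j\<in>{1..K}. measure P (S j) - measure Q (S j)) \<le> (\<Sum>j\<in>{1..K}. dTV P Q)"
      using measure_diff_le_dTV[OF P Q S] by (intro sum_mono) (simp add: abs_le_iff)
    then show ?thesis
      using K(1) integral_s[OF P refl] integral_s[OF Q sets_eq]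
      by (simp add: sum_subtractf diff_divide_distrib[symmetric] divide_le_eq mult.commute)
  qed
  ultimately show "integral\<^sup>L P f - integral\<^sup>L Q f \<le> dTV P Q + e"
    using K(2) by linarith
qed

lemma abs_integral_diff_le_dTV:
  fixes f :: "'a \<Rightarrow> real"
  assumes P: "prob_space P" and Q: "prob_space Q" and sets_eq: "sets Q = sets P"
    and f: "f \<in> borel_measurable P" and f_range: "\<And>x. x \<in> space P \<Longrightarrow> a \<le> f x \<and> f x \<le> b"
  shows "\<bar>integral\<^sup>L P f - integral\<^sup>L Q f\<bar> \<le> (b - a) * dTV P Q"
proof -
  interpret P: prob_space P by fact
  interpret Q: prob_space Q by fact
  have space_eq: "space Q = space P" and fQ: "f \<in> borel_measurable Q"
    using sets_eq_imp_space_eq[OF sets_eq] f measurable_cong_sets[OF sets_eq refl] by auto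
  have "x \<in> space P \<Longrightarrow> \<bar>f x\<bar> \<le> \<bar>a\<bar> + \<bar>b\<bar>" for x
    using f_range[of x] unfolding abs_le_iff by linarith
  then have int: "integrable P f" "integrable Q f"
    using space_eq
    by (auto intro!: integrable_bounded[OF P f, of "\<bar>a\<bar> + \<bar>b\<bar>"] integrable_bounded[OF Q fQ, of "\<bar>a\<bar> + \<bar>b\<bar>"])
  consider "a = b" | "a < b"
    using f_range P.not_empty by fastforce
  then show ?thesis
  proof cases
    case 1
    then have fa: "x \<in> space P \<Longrightarrow> f x = a" for x
      using f_range[of x] by auto
    have "integral\<^sup>L P f = integral\<^sup>L P (\<lambda>_. a)" "integral\<^sup>L Q f = integral\<^sup>L Q (\<lambda>_. a)"
      by (rule Bochner_Integration.integral_cong; simp add: fa space_eq)+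
    then show ?thesis
      using 1 by (simp add: P.prob_space Q.prob_space)
  next
    case 2
    define g where "g x = (f x - a) / (b - a)" for x
    have g: "g \<in> borel_measurable P" "g \<in> borel_measurable Q"
      unfolding g_def using f fQ by measurable
    have g01: "x \<in> space P \<Longrightarrow> 0 \<le> g x \<and> g x \<le> 1" for x
      using f_range[of x] 2 by (auto simp: g_def divide_le_eq)
    have "integral\<^sup>L P g - integral\<^sup>L Q g = (integral\<^sup>L P f - integral\<^sup>L Q f) / (b - a)"
      unfolding g_def using int by (simp add: P.prob_space Q.prob_space diff_divide_distrib)
    then have "\<bar>integral\<^sup>L P f - integral\<^sup>L Q f\<bar> / (b - a) = \<bar>integral\<^sup>L P g - integral\<^sup>L Q g\<bar>"
      using 2 by simp
    also have "\<dots> \<le> dTV P Q"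
      using integral_diff_le_dTV[OF P Q sets_eq g(1) g01]
        integral_diff_le_dTV[OF Q P sets_eq[symmetric] g(2)] g01 space_eq dTV_commute[OF sets_eq]
      by (simp add: abs_le_iff)
    finally show ?thesis
      using 2 by (simp add: pos_divide_le_eq mult.commute)
  qed
qed

section \<open>Exact validity of the rank test\<close>

lemma card_low_rank_le:
  fixes t :: "'i \<Rightarrow> real"
  assumes "finite I" "0 \<le> c"
  shows "real (card {j\<in>I. real (card {m\<in>I. t j \<le> t m}) \<le> c}) \<le> c"
proof (cases "{j\<in>I. real (card {m\<in>I. t j \<le> t m}) \<le> c} = {}")
  case False
  define S where "S = {j\<in>I. real (card {m\<in>I. t j \<le> t m}) \<le> c}"
  have "finite S" "S \<noteq> {}"
    using assms(1) False by (simp_all add: S_def)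
  then have "Min (t ` S) \<in> t ` S"
    by (intro Min_in) auto
  then obtain j0 where j0: "j0 \<in> S" "t j0 = Min (t ` S)"
    by auto
  then have j0_min: "j \<in> S \<Longrightarrow> t j0 \<le> t j" for j
    using \<open>finite S\<close> by simp
  have "card S \<le> card {m\<in>I. t j0 \<le> t m}"
    using assms(1) j0_min by (intro card_mono) (auto simp: S_def)
  also have "real (card {m\<in>I. t j0 \<le> t m}) \<le> c"
    using j0(1) by (simp add: S_def)
  finally show ?thesis
    unfolding S_def by linarith
qed (use assms(2) in \<open>simp only: card.empty of_nat_0\<close>)

lemma nn_integral_PiM_reindex:
  assumes P: "prob_space P" and \<sigma>: "bij_betw \<sigma> I I"
    and f: "f \<in> borel_measurable (PiM I (\<lambda>_. P))"
  shows "(\<integral>\<^sup>+w. f (\<lambda>i\<in>I. w (\<sigma> i)) \<partial>PiM I (\<lambda>_. P)) = (\<integral>\<^sup>+w. f w \<partial>PiM I (\<lambda>_. P))"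
proof -
  have \<sigma>I: "\<sigma> \<in> I \<rightarrow> I"
    using \<sigma> by (auto simp: bij_betw_def)
  have m: "(\<lambda>w. \<lambda>i\<in>I. w (\<sigma> i)) \<in> PiM I (\<lambda>_. P) \<rightarrow>\<^sub>M PiM I (\<lambda>_. P)"
    using \<sigma>I by measurable (use \<sigma>I in blast)
  have "distr (PiM I (\<lambda>_. P)) (PiM I (\<lambda>_. P)) (\<lambda>w. \<lambda>i\<in>I. w (\<sigma> i)) = PiM I (\<lambda>_. P)"
    using distr_PiM_reindex[of I "\<lambda>_. P" \<sigma> I] P \<sigma> \<sigma>I by (simp add: bij_betw_def)
  then have "(\<integral>\<^sup>+w. f w \<partial>PiM I (\<lambda>_. P))
      = (\<integral>\<^sup>+w. f w \<partial>distr (PiM I (\<lambda>_. P)) (PiM I (\<lambda>_. P)) (\<lambda>w. \<lambda>i\<in>I. w (\<sigma> i)))"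
    by simp
  then show ?thesis
    using nn_integral_distr[OF m] f by simp
qed

lemma nn_integral_PiM_insert:
  assumes P: "prob_space P" and i: "i \<notin> I" and f: "f \<in> borel_measurable (PiM (insert i I) (\<lambda>_. P))"
  shows "(\<integral>\<^sup>+x. \<integral>\<^sup>+d. f (d(i := x)) \<partial>PiM I (\<lambda>_. P) \<partial>P) = (\<integral>\<^sup>+w. f w \<partial>PiM (insert i I) (\<lambda>_. P))"
proof -
  interpret PI: prob_space "PiM I (\<lambda>_. P)"
    by (rule prob_space_PiM) (rule P)
  have upd: "(\<lambda>(x, d). d(i := x)) \<in> P \<Otimes>\<^sub>M PiM I (\<lambda>_. P) \<rightarrow>\<^sub>M PiM (insert i I) (\<lambda>_. P)"
    by measurable
  have "(\<integral>\<^sup>+x. \<integral>\<^sup>+d. f (d(i := x)) \<partial>PiM I (\<lambda>_. P) \<partial>P)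
      = (\<integral>\<^sup>+z. f ((\<lambda>(x, d). d(i := x)) z) \<partial>(P \<Otimes>\<^sub>M PiM I (\<lambda>_. P)))"
    using PI.nn_integral_fst[OF measurable_compose[OF upd f]] by simp
  also have "\<dots> = (\<integral>\<^sup>+w. f w \<partial>distr (P \<Otimes>\<^sub>M PiM I (\<lambda>_. P)) (PiM (insert i I) (\<lambda>_. P)) (\<lambda>(x, d). d(i := x)))"
    using f by (intro nn_integral_distr[symmetric] upd) simp
  also have "distr (P \<Otimes>\<^sub>M PiM I (\<lambda>_. P)) (PiM (insert i I) (\<lambda>_. P)) (\<lambda>(x, d). d(i := x)) = PiM (insert i I) (\<lambda>_. P)"
    using P i by (intro distr_pair_PiM_eq_PiM) auto
  finally show ?thesis .
qed

definition low_rank :: "('v \<Rightarrow> real) \<Rightarrow> 'i set \<Rightarrow> real \<Rightarrow> 'i \<Rightarrow> ('i \<Rightarrow> 'v) set" where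
  "low_rank t I c j = {w. real (card {m\<in>I. t (w j) \<le> t (w m)}) \<le> c}"

lemma sum_indicator_low_rank_le:
  assumes "finite I" "0 \<le> c"
  shows "(\<Sum>j\<in>I. indicator (low_rank t I c j) w) \<le> ennreal c"
proof -
  have "(\<Sum>j\<in>I. indicator (low_rank t I c j) w :: ennreal) = ennreal (real (card {j\<in>I. w \<in> low_rank t I c j}))"
    using assms(1) by (simp add: indicator_def sum.If_cases Int_def ennreal_of_nat_eq_real_of_nat)
  also have "\<dots> \<le> ennreal c"
    using card_low_rank_le[OF assms, of "\<lambda>j. t (w j)"] by (simp add: low_rank_def ennreal_leI)
  finally show ?thesis .
qed

lemma measurable_low_rank:
  assumes [measurable]: "t \<in> borel_measurable P" and "finite I" "j \<in> I"
  shows "(indicator (low_rank t I c j) :: _ \<Rightarrow> ennreal) \<in> borel_measurable (PiM I (\<lambda>_. P))"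
proof -
  have "(\<lambda>w. \<Sum>m\<in>I. if t (w j) \<le> t (w m) then 1 else 0 :: real) \<in> borel_measurable (PiM I (\<lambda>_. P))"
    using assms(2,3) by measurable
  moreover have "(\<Sum>m\<in>I. if t (w j) \<le> t (w m) then 1 else 0 :: real) = real (card {m\<in>I. t (w j) \<le> t (w m)})" for w
    using assms(2) by (simp add: sum.If_cases Int_def)
  ultimately have "low_rank t I c j \<inter> space (PiM I (\<lambda>_. P)) \<in> sets (PiM I (\<lambda>_. P))"
    unfolding low_rank_def by simp
  then show ?thesis
    by (simp add: borel_measurable_indicator_iff)
qed

lemma nn_integral_low_rank_transpose:
  assumes P: "prob_space P" and t: "t \<in> borel_measurable P" and I: "finite I" "j \<in> I" "k \<in> I"
  shows "(\<integral>\<^sup>+w. indicator (low_rank t I c j) w \<partial>PiM I (\<lambda>_. P)) = (\<integral>\<^sup>+w. indicator (low_rank t I c k) w \<partial>PiM I (\<lambda>_. P))"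
proof -
  define \<sigma> where "\<sigma> = Transposition.transpose j k"
  have \<sigma>: "bij_betw \<sigma> I I"
    unfolding \<sigma>_def using I by simp
  have "indicator (low_rank t I c k) (\<lambda>i\<in>I. w (\<sigma> i)) = (indicator (low_rank t I c j) w :: ennreal)" for w
  proof -
    have "(\<Sum>m\<in>I. if t (w j) \<le> t (w (\<sigma> m)) then 1 else 0 :: nat) = (\<Sum>m\<in>I. if t (w j) \<le> t (w m) then 1 else 0)"
      by (rule sum.reindex_bij_betw[OF \<sigma>])
    then have "card {m\<in>I. t (w j) \<le> t (w (\<sigma> m))} = card {m\<in>I. t (w j) \<le> t (w m)}"
      using I(1) by (simp add: sum.If_cases Int_def)
    moreover have "{m\<in>I. t ((\<lambda>i\<in>I. w (\<sigma> i)) k) \<le> t ((\<lambda>i\<in>I. w (\<sigma> i)) m)} = {m\<in>I. t (w j) \<le> t (w (\<sigma> m))}"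
      using I(3) by (auto simp: \<sigma>_def)
    ultimately show ?thesis
      unfolding low_rank_def indicator_def mem_Collect_eq by simp
  qed
  then have "(\<integral>\<^sup>+w. indicator (low_rank t I c j) w \<partial>PiM I (\<lambda>_. P))
      = (\<integral>\<^sup>+w. indicator (low_rank t I c k) (\<lambda>i\<in>I. w (\<sigma> i)) \<partial>PiM I (\<lambda>_. P))"
    by simp
  also have "\<dots> = (\<integral>\<^sup>+w. indicator (low_rank t I c k) w \<partial>PiM I (\<lambda>_. P))"
    by (rule nn_integral_PiM_reindex[OF P \<sigma> measurable_low_rank[OF t I(1,3)]])
  finally show ?thesis .
qed

text \<open>By exchangeability every coordinate has the same probability of a low rank, and by
  \<open>card_low_rank_le\<close> at most \<open>c\<close> coordinates have one.\<close>
lemma nn_integral_low_rank_le: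
  assumes P: "prob_space P" and t: "t \<in> borel_measurable P" and I: "finite I" "i \<in> I" and "0 \<le> c"
  shows "(\<integral>\<^sup>+w. indicator (low_rank t I c i) w \<partial>PiM I (\<lambda>_. P)) \<le> ennreal (c / real (card I))"
proof -
  interpret W: prob_space "PiM I (\<lambda>_. P)"
    by (rule prob_space_PiM) (rule P)
  have "of_nat (card I) * (\<integral>\<^sup>+w. indicator (low_rank t I c i) w \<partial>PiM I (\<lambda>_. P))
      = (\<Sum>j\<in>I. \<integral>\<^sup>+w. indicator (low_rank t I c i) w \<partial>PiM I (\<lambda>_. P))"
    by simp
  also have "\<dots> = (\<Sum>j\<in>I. \<integral>\<^sup>+w. indicator (low_rank t I c j) w \<partial>PiM I (\<lambda>_. P))"
    using nn_integral_low_rank_transpose[OF P t I(1) _ I(2)] by (intro sum.cong) auto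
  also have "\<dots> = (\<integral>\<^sup>+w. (\<Sum>j\<in>I. indicator (low_rank t I c j) w) \<partial>PiM I (\<lambda>_. P))"
    using measurable_low_rank[OF t I(1)] by (intro nn_integral_sum[symmetric])
  also have "\<dots> \<le> (\<integral>\<^sup>+w. ennreal c \<partial>PiM I (\<lambda>_. P))"
    using sum_indicator_low_rank_le[OF I(1) \<open>0 \<le> c\<close>] by (intro nn_integral_mono)
  finally have bound: "(\<integral>\<^sup>+w. indicator (low_rank t I c i) w \<partial>PiM I (\<lambda>_. P)) * ennreal (real (card I)) \<le> ennreal c"
    by (simp add: W.emeasure_space_1 ennreal_of_nat_eq_real_of_nat mult.commute)
  have "card I > 0"
    using I by (auto simp: card_gt_0_iff)
  then have "(\<integral>\<^sup>+w. indicator (low_rank t I c i) w \<partial>PiM I (\<lambda>_. P))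
      = (\<integral>\<^sup>+w. indicator (low_rank t I c i) w \<partial>PiM I (\<lambda>_. P)) * ennreal (real (card I)) / ennreal (real (card I))"
    by (simp add: mult_divide_eq_ennreal)
  also have "\<dots> \<le> ennreal c / ennreal (real (card I))"
    by (rule divide_right_mono_ennreal[OF bound])
  also have "\<dots> = ennreal (c / real (card I))"
    using \<open>card I > 0\<close> \<open>0 \<le> c\<close> by (simp add: divide_ennreal)
  finally show ?thesis .
qed

lemma rank_test_valid:
  fixes t :: "'v \<Rightarrow> real"
  assumes P: "prob_space P" and t: "t \<in> borel_measurable P" and "0 \<le> c"
  shows "(\<integral>\<^sup>+x. \<integral>\<^sup>+d. indicator {d. 1 + real (card {m\<in>{..<M}. t x \<le> t (d m)}) \<le> c} d
            \<partial>PiM {..<M} (\<lambda>_. P) \<partial>P) \<le> ennreal (c / (real M + 1))"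
proof -
  have "indicator {d. 1 + real (card {m\<in>{..<M}. t x \<le> t (d m)}) \<le> c} d
      = (indicator (low_rank t (insert M {..<M}) c M) (d(M := x)) :: ennreal)" for x d
  proof -
    have "{m\<in>insert M {..<M}. t x \<le> t ((d(M := x)) m)} = insert M {m\<in>{..<M}. t x \<le> t (d m)}"
      by auto
    then show ?thesis
      by (simp add: low_rank_def indicator_def add.commute)
  qed
  then have "(\<integral>\<^sup>+x. \<integral>\<^sup>+d. indicator {d. 1 + real (card {m\<in>{..<M}. t x \<le> t (d m)}) \<le> c} d
            \<partial>PiM {..<M} (\<lambda>_. P) \<partial>P)
      = (\<integral>\<^sup>+w. indicator (low_rank t (insert M {..<M}) c M) w \<partial>PiM (insert M {..<M}) (\<lambda>_. P))"
    using nn_integral_PiM_insert[OF P _ measurable_low_rank[OF t, of "insert M {..<M}" M c]] by simp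
  also have "\<dots> \<le> ennreal (c / real (card (insert M {..<M})))"
    using \<open>0 \<le> c\<close> by (intro nn_integral_low_rank_le[OF P t]) auto
  finally show ?thesis
    by (simp add: add.commute)
qed

section \<open>Products of probability kernels\<close>

lemma kernel_prob_space:
  "K \<in> W \<rightarrow>\<^sub>M prob_algebra V \<Longrightarrow> w \<in> space W \<Longrightarrow> prob_space (K w) \<and> sets (K w) = sets V"
  using measurable_space[of K W "prob_algebra V" w] by (simp add: space_prob_algebra)

lemma emeasure_PiM_PiE:
  assumes "finite I" "\<And>i. i \<in> I \<Longrightarrow> prob_space (M i)" "\<And>i. i \<in> I \<Longrightarrow> A i \<in> sets (M i)"
  shows "emeasure (PiM I M) (PiE I A) = (\<Prod>i\<in>I. emeasure (M i) (A i))"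
proof -
  have "prod_emb I M I (PiE I A) = PiE I A"
    using assms(3) sets.sets_into_space by (intro prod_emb_PiE_same_index) blast
  then show ?thesis
    using emeasure_PiM_emb[of I M I A] assms by auto
qed

lemma PiM_eqI_prob_space:
  assumes fin: "finite I" and M: "\<And>i. i \<in> I \<Longrightarrow> prob_space (M i)"
    and P: "prob_space P" "sets P = sets (PiM I M)"
    and eq: "\<And>A. (\<And>i. i \<in> I \<Longrightarrow> A i \<in> sets (M i)) \<Longrightarrow>
      emeasure P (PiE I A) = (\<Prod>i\<in>I. emeasure (M i) (A i))"
  shows "P = PiM I M"
proof (rule measure_eqI_PiM_finite[OF fin P(2) refl])
  show "emeasure P (PiE I A) = emeasure (PiM I M) (PiE I A)" if "\<And>i. i \<in> I \<Longrightarrow> A i \<in> sets (M i)" for A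
    using eq[OF that] emeasure_PiM_PiE[OF fin M that] by simp
  show "range (\<lambda>_::nat. space (PiM I M)) \<subseteq> prod_algebra I M"
    using prod_algebra_eq_finite[OF fin, of M] by (auto simp: space_PiM)
  show "emeasure P (space (PiM I M)) \<noteq> \<infinity>"
    using prob_space.emeasure_le_1[OF P(1), of "space (PiM I M)"] by (auto simp: top_unique)
qed simp

lemma measurable_PiM_kernel:
  assumes fin: "finite I" and L: "\<And>i. i \<in> I \<Longrightarrow> L i \<in> N \<rightarrow>\<^sub>M prob_algebra (B i)"
  shows "(\<lambda>w. PiM I (\<lambda>i. L i w)) \<in> N \<rightarrow>\<^sub>M prob_algebra (PiM I B)"
proof (rule measurable_prob_algebra_generated[OF sets_PiM Int_stable_prod_algebra prod_algebra_sets_into_space])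
  fix w assume w: "w \<in> space N"
  have L_w: "i \<in> I \<Longrightarrow> prob_space (L i w) \<and> sets (L i w) = sets (B i)" for i
    using measurable_space[OF L w] unfolding space_prob_algebra by blast
  show "prob_space (PiM I (\<lambda>i. L i w))"
    using L_w by (intro prob_space_PiM) blast
  show "sets (PiM I (\<lambda>i. L i w)) = sets (PiM I B)"
    using L_w by (intro sets_PiM_cong) blast+
next
  fix A assume "A \<in> prod_algebra I B"
  then obtain X where A: "A = PiE I X" and X: "X \<in> (\<Pi> i\<in>I. sets (B i))"
    using prod_algebra_eq_finite[OF fin, of B] by blast
  have "(\<lambda>w. \<Prod>i\<in>I. emeasure (L i w) (X i)) \<in> borel_measurable N"
    using X by (intro borel_measurable_prod_ennreal measurable_emeasure_kernel[OF measurable_prob_algebraD[OF L]]) auto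
  moreover have "emeasure (PiM I (\<lambda>i. L i w)) A = (\<Prod>i\<in>I. emeasure (L i w) (X i))" if w: "w \<in> space N" for w
    using measurable_space[OF L w] X unfolding A space_prob_algebra
    by (intro emeasure_PiM_PiE[OF fin]) auto
  ultimately show "(\<lambda>w. emeasure (PiM I (\<lambda>i. L i w)) A) \<in> borel_measurable N"
    by (rule measurable_cong[THEN iffD2, rotated])
qed

lemma distr_PiM_componentwise:
  assumes fin: "finite I" and M: "\<And>i. i \<in> I \<Longrightarrow> prob_space (M i)"
    and f: "\<And>i. i \<in> I \<Longrightarrow> f i \<in> M i \<rightarrow>\<^sub>M N i"
  shows "distr (PiM I M) (PiM I N) (\<lambda>x. \<lambda>i\<in>I. f i (x i)) = PiM I (\<lambda>i. distr (M i) (N i) (f i))"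
proof (rule PiM_eqI_prob_space[OF fin])
  have m: "(\<lambda>x. \<lambda>i\<in>I. f i (x i)) \<in> PiM I M \<rightarrow>\<^sub>M PiM I N"
    using f by (intro measurable_restrict measurable_compose[OF measurable_component_singleton]) auto
  show "prob_space (distr (PiM I M) (PiM I N) (\<lambda>x. \<lambda>i\<in>I. f i (x i)))"
    using M by (intro prob_space.prob_space_distr[OF prob_space_PiM m]) auto
  show "prob_space (distr (M i) (N i) (f i))" if "i \<in> I" for i
    using M f that by (intro prob_space.prob_space_distr) auto
  show "sets (distr (PiM I M) (PiM I N) (\<lambda>x. \<lambda>i\<in>I. f i (x i))) = sets (PiM I (\<lambda>i. distr (M i) (N i) (f i)))"
    by (auto intro!: sets_PiM_cong)
  fix A assume A: "\<And>i. i \<in> I \<Longrightarrow> A i \<in> sets (distr (M i) (N i) (f i))"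
  have "(\<lambda>x. \<lambda>i\<in>I. f i (x i)) -` PiE I A \<inter> space (PiM I M) = PiE I (\<lambda>i. f i -` A i \<inter> space (M i))"
    by (auto simp: space_PiM PiE_iff)
  moreover have "PiE I A \<in> sets (PiM I N)"
    using A by (auto intro!: sets_PiM_I_finite fin)
  ultimately have "emeasure (distr (PiM I M) (PiM I N) (\<lambda>x. \<lambda>i\<in>I. f i (x i))) (PiE I A)
      = emeasure (PiM I M) (PiE I (\<lambda>i. f i -` A i \<inter> space (M i)))"
    by (simp add: emeasure_distr[OF m])
  also have "\<dots> = (\<Prod>i\<in>I. emeasure (distr (M i) (N i) (f i)) (A i))"
    using A f M by (subst emeasure_PiM_PiE[OF fin]) (auto intro!: prod.cong simp: emeasure_distr)
  finally show "emeasure (distr (PiM I M) (PiM I N) (\<lambda>x. \<lambda>i\<in>I. f i (x i))) (PiE I A)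
      = (\<Prod>i\<in>I. emeasure (distr (M i) (N i) (f i)) (A i))" .
qed

lemma bind_PiM_kernel:
  assumes fin: "finite I" and \<mu>: "prob_space \<mu>" and L: "L \<in> \<mu> \<rightarrow>\<^sub>M prob_algebra N"
  shows "PiM I (\<lambda>_. \<mu>) \<bind> (\<lambda>zs. PiM I (\<lambda>i. L (zs i))) = PiM I (\<lambda>_. \<mu> \<bind> L)"
proof -
  interpret \<mu>: prob_space \<mu> by fact
  interpret product_sigma_finite "\<lambda>_. \<mu>"
    by (simp add: product_sigma_finite_def \<mu>.sigma_finite_measure_axioms)
  have \<mu>_space: "\<mu> \<in> space (prob_algebra \<mu>)"
    by (simp add: space_prob_algebra \<mu>)
  have Z_space: "PiM I (\<lambda>_. \<mu>) \<in> space (prob_algebra (PiM I (\<lambda>_. \<mu>)))"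
    using \<mu> by (simp add: space_prob_algebra prob_space_PiM)
  have K: "(\<lambda>zs. PiM I (\<lambda>i. L (zs i))) \<in> PiM I (\<lambda>_. \<mu>) \<rightarrow>\<^sub>M prob_algebra (PiM I (\<lambda>_. N))"
    using L by (intro measurable_PiM_kernel[OF fin] measurable_compose[OF measurable_component_singleton]) auto
  show ?thesis
  proof (rule PiM_eqI_prob_space[OF fin])
    show "prob_space (\<mu> \<bind> L)" "prob_space (PiM I (\<lambda>_. \<mu>) \<bind> (\<lambda>zs. PiM I (\<lambda>i. L (zs i))))"
      by (rule prob_space_bind'[OF \<mu>_space L], rule prob_space_bind'[OF Z_space K])
    show "sets (PiM I (\<lambda>_. \<mu>) \<bind> (\<lambda>zs. PiM I (\<lambda>i. L (zs i)))) = sets (PiM I (\<lambda>_. \<mu> \<bind> L))"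
      unfolding sets_bind'[OF Z_space K] by (intro sets_PiM_cong) (simp_all add: sets_bind'[OF \<mu>_space L])
    fix A assume A: "\<And>i. i \<in> I \<Longrightarrow> A i \<in> sets (\<mu> \<bind> L)"
    then have A_N: "i \<in> I \<Longrightarrow> A i \<in> sets N" for i
      by (simp add: sets_bind'[OF \<mu>_space L])
    have "emeasure (PiM I (\<lambda>_. \<mu>) \<bind> (\<lambda>zs. PiM I (\<lambda>i. L (zs i)))) (PiE I A)
        = (\<integral>\<^sup>+zs. emeasure (PiM I (\<lambda>i. L (zs i))) (PiE I A) \<partial>PiM I (\<lambda>_. \<mu>))"
      using A_N by (intro emeasure_bind_prob_algebra[OF Z_space K]) (auto intro!: sets_PiM_I_finite fin)
    also have "\<dots> = (\<integral>\<^sup>+zs. (\<Prod>i\<in>I. emeasure (L (zs i)) (A i)) \<partial>PiM I (\<lambda>_. \<mu>))"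
    proof (rule nn_integral_cong)
      fix zs assume "zs \<in> space (PiM I (\<lambda>_. \<mu>))"
      then have "i \<in> I \<Longrightarrow> prob_space (L (zs i)) \<and> sets (L (zs i)) = sets N" for i
        using measurable_space[OF L] by (auto simp: space_PiM space_prob_algebra)
      then show "emeasure (PiM I (\<lambda>i. L (zs i))) (PiE I A) = (\<Prod>i\<in>I. emeasure (L (zs i)) (A i))"
        using A_N by (intro emeasure_PiM_PiE[OF fin]) auto
    qed
    also have "\<dots> = (\<Prod>i\<in>I. \<integral>\<^sup>+z. emeasure (L z) (A i) \<partial>\<mu>)"
      using A_N by (intro product_nn_integral_prod[OF fin] measurable_emeasure_kernel[OF measurable_prob_algebraD[OF L]])
    also have "\<dots> = (\<Prod>i\<in>I. emeasure (\<mu> \<bind> L) (A i))"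
      using A_N by (intro prod.cong refl emeasure_bind_prob_algebra[OF \<mu>_space L, symmetric])
    finally show "emeasure (PiM I (\<lambda>_. \<mu>) \<bind> (\<lambda>zs. PiM I (\<lambda>i. L (zs i)))) (PiE I A)
        = (\<Prod>i\<in>I. emeasure (\<mu> \<bind> L) (A i))" .
  qed
qed

lemma emeasure_bind_distr_Pair_Times:
  assumes \<mu>: "prob_space \<mu>" and K: "K \<in> \<mu> \<rightarrow>\<^sub>M prob_algebra X" and gh[measurable]: "gh \<in> \<mu> \<rightarrow>\<^sub>M U"
    and A: "A \<in> sets X" and B: "B \<in> sets U"
  shows "emeasure (\<mu> \<bind> (\<lambda>z. distr (K z) (U \<Otimes>\<^sub>M X) (\<lambda>x. (gh z, x)))) (B \<times> A)
    = (\<integral>\<^sup>+z. indicator B (gh z) * emeasure (K z) A \<partial>\<mu>)"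
proof -
  have \<mu>_space: "\<mu> \<in> space (prob_algebra \<mu>)"
    by (simp add: space_prob_algebra \<mu>)
  have L: "(\<lambda>z. distr (K z) (U \<Otimes>\<^sub>M X) (\<lambda>x. (gh z, x))) \<in> \<mu> \<rightarrow>\<^sub>M prob_algebra (U \<Otimes>\<^sub>M X)"
    by (intro measurable_distr_prob_space2[OF K]) measurable
  have "emeasure (\<mu> \<bind> (\<lambda>z. distr (K z) (U \<Otimes>\<^sub>M X) (\<lambda>x. (gh z, x)))) (B \<times> A)
      = (\<integral>\<^sup>+z. emeasure (distr (K z) (U \<Otimes>\<^sub>M X) (\<lambda>x. (gh z, x))) (B \<times> A) \<partial>\<mu>)"
    using A B by (intro emeasure_bind_prob_algebra[OF \<mu>_space L]) simp
  also have "\<dots> = (\<integral>\<^sup>+z. indicator B (gh z) * emeasure (K z) A \<partial>\<mu>)"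
  proof (rule nn_integral_cong)
    fix z assume z: "z \<in> space \<mu>"
    have sets_K: "sets (K z) = sets X"
      using measurable_space[OF K z] by (simp add: space_prob_algebra)
    have "(\<lambda>x. (gh z, x)) \<in> K z \<rightarrow>\<^sub>M U \<Otimes>\<^sub>M X"
      using measurable_space[OF gh z] by (simp add: measurable_cong_sets[OF sets_K refl])
    moreover have "(\<lambda>x. (gh z, x)) -` (B \<times> A) \<inter> space (K z) = (if gh z \<in> B then A else {})"
      using sets.sets_into_space[OF A] sets_eq_imp_space_eq[OF sets_K] by auto
    ultimately show "emeasure (distr (K z) (U \<Otimes>\<^sub>M X) (\<lambda>x. (gh z, x))) (B \<times> A) = indicator B (gh z) * emeasure (K z) A"
      using A B by (simp add: emeasure_distr)
  qed
  finally show ?thesis .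
qed

text \<open>This is where the conditional-law hypotheses of the theorem enter: \<open>cond\<close> says that
  \<open>K1\<close> and \<open>K2\<close> induce the same conditional law of \<open>x\<close> given \<open>gh z\<close>.\<close>
lemma bind_distr_Pair_eq:
  assumes \<mu>: "prob_space \<mu>" and K1: "K1 \<in> \<mu> \<rightarrow>\<^sub>M prob_algebra X"
    and K2: "K2 \<in> \<mu> \<rightarrow>\<^sub>M prob_algebra X" and gh[measurable]: "gh \<in> \<mu> \<rightarrow>\<^sub>M U"
    and cond: "\<And>A B. A \<in> sets X \<Longrightarrow> B \<in> sets U \<Longrightarrow>
       (\<integral>\<^sup>+z. indicator B (gh z) * emeasure (K1 z) A \<partial>\<mu>) = (\<integral>\<^sup>+z. indicator B (gh z) * emeasure (K2 z) A \<partial>\<mu>)"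
  shows "\<mu> \<bind> (\<lambda>z. distr (K1 z) (U \<Otimes>\<^sub>M X) (\<lambda>x. (gh z, x)))
       = \<mu> \<bind> (\<lambda>z. distr (K2 z) (U \<Otimes>\<^sub>M X) (\<lambda>x. (gh z, x)))"
proof -
  have \<mu>_space: "\<mu> \<in> space (prob_algebra \<mu>)"
    by (simp add: space_prob_algebra \<mu>)
  have L: "(\<lambda>z. distr (K z) (U \<Otimes>\<^sub>M X) (\<lambda>x. (gh z, x))) \<in> \<mu> \<rightarrow>\<^sub>M prob_algebra (U \<Otimes>\<^sub>M X)"
    if "K \<in> \<mu> \<rightarrow>\<^sub>M prob_algebra X" for K
    by (intro measurable_distr_prob_space2[OF that]) measurable
  let ?G = "{B \<times> A |B A. B \<in> sets U \<and> A \<in> sets X}"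
  have sets_eq: "sets (\<mu> \<bind> (\<lambda>z. distr (K z) (U \<Otimes>\<^sub>M X) (\<lambda>x. (gh z, x)))) = sigma_sets (space U \<times> space X) ?G"
    if "K \<in> \<mu> \<rightarrow>\<^sub>M prob_algebra X" for K
    by (simp add: sets_bind'[OF \<mu>_space L[OF that]] sets_pair_measure)
  show ?thesis
  proof (rule measure_eqI_generator_eq[OF Int_stable_pair_measure_generator[of U X]])
    show "?G \<subseteq> Pow (space U \<times> space X)"
      using sets.sets_into_space[of _ U] sets.sets_into_space[of _ X] by auto
    show "emeasure (\<mu> \<bind> (\<lambda>z. distr (K1 z) (U \<Otimes>\<^sub>M X) (\<lambda>x. (gh z, x)))) R
        = emeasure (\<mu> \<bind> (\<lambda>z. distr (K2 z) (U \<Otimes>\<^sub>M X) (\<lambda>x. (gh z, x)))) R" if "R \<in> ?G" for R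
      using that cond emeasure_bind_distr_Pair_Times[OF \<mu> K1 gh] emeasure_bind_distr_Pair_Times[OF \<mu> K2 gh]
      by auto
    show "range (\<lambda>_::nat. space U \<times> space X) \<subseteq> ?G" "(\<Union>i::nat. space U \<times> space X) = space U \<times> space X"
      by auto
    show "emeasure (\<mu> \<bind> (\<lambda>z. distr (K1 z) (U \<Otimes>\<^sub>M X) (\<lambda>x. (gh z, x)))) (space U \<times> space X) \<noteq> \<infinity>"
      using prob_space.emeasure_le_1[OF prob_space_bind'[OF \<mu>_space L[OF K1]], of "space U \<times> space X"]
      by (auto simp: top_unique)
  qed (simp_all add: sets_eq K1 K2)
qed

lemma nn_integral_PiM_kernel_Pair:
  assumes fin: "finite I" and \<mu>: "prob_space \<mu>" and K: "K \<in> \<mu> \<rightarrow>\<^sub>M prob_algebra X"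
    and gh[measurable]: "gh \<in> \<mu> \<rightarrow>\<^sub>M U"
    and F: "(\<lambda>(u, x). F u x) \<in> borel_measurable (PiM I (\<lambda>_. U) \<Otimes>\<^sub>M PiM I (\<lambda>_. X))"
  shows "(\<integral>\<^sup>+zs. \<integral>\<^sup>+x. F (\<lambda>i\<in>I. gh (zs i)) x \<partial>PiM I (\<lambda>i. K (zs i)) \<partial>PiM I (\<lambda>_. \<mu>))
       = (\<integral>\<^sup>+w. F (\<lambda>i\<in>I. fst (w i)) (\<lambda>i\<in>I. snd (w i))
            \<partial>PiM I (\<lambda>_. \<mu> \<bind> (\<lambda>z. distr (K z) (U \<Otimes>\<^sub>M X) (\<lambda>x. (gh z, x)))))"
proof -
  define L where "L = (\<lambda>z. distr (K z) (U \<Otimes>\<^sub>M X) (\<lambda>x. (gh z, x)))"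
  define G where "G w = F (\<lambda>i\<in>I. fst (w i)) (\<lambda>i\<in>I. snd (w i))" for w
  have L: "L \<in> \<mu> \<rightarrow>\<^sub>M prob_algebra (U \<Otimes>\<^sub>M X)"
    unfolding L_def by (intro measurable_distr_prob_space2[OF K]) measurable
  have G: "G \<in> borel_measurable (PiM I (\<lambda>_. U \<Otimes>\<^sub>M X))"
    unfolding G_def using F by measurable
  have inner: "(\<integral>\<^sup>+x. F (\<lambda>i\<in>I. gh (zs i)) x \<partial>PiM I (\<lambda>i. K (zs i))) = (\<integral>\<^sup>+w. G w \<partial>PiM I (\<lambda>i. L (zs i)))"
    if zs: "zs \<in> space (PiM I (\<lambda>_. \<mu>))" for zs
  proof -
    have K_zs: "i \<in> I \<Longrightarrow> prob_space (K (zs i)) \<and> sets (K (zs i)) = sets X" for i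
      using zs measurable_space[OF K] by (auto simp: space_PiM space_prob_algebra)
    have pair: "(\<lambda>x. (gh (zs i), x)) \<in> K (zs i) \<rightarrow>\<^sub>M U \<Otimes>\<^sub>M X" if "i \<in> I" for i
    proof -
      have "gh (zs i) \<in> space U"
        using zs that measurable_space[OF gh] by (auto simp: space_PiM)
      then show ?thesis
        using measurable_Pair1'[of "gh (zs i)" U X] K_zs[OF that]
        by (simp add: measurable_cong_sets[OF _ refl, of "K (zs i)" X])
    qed
    have "(\<integral>\<^sup>+w. G w \<partial>PiM I (\<lambda>i. L (zs i)))
        = (\<integral>\<^sup>+w. G w \<partial>distr (PiM I (\<lambda>i. K (zs i))) (PiM I (\<lambda>_. U \<Otimes>\<^sub>M X)) (\<lambda>x. \<lambda>i\<in>I. (gh (zs i), x i)))"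
      unfolding L_def using K_zs pair
      by (subst distr_PiM_componentwise[OF fin, where f="\<lambda>i x. (gh (zs i), x)"]) auto
    also have "\<dots> = (\<integral>\<^sup>+x. G (\<lambda>i\<in>I. (gh (zs i), x i)) \<partial>PiM I (\<lambda>i. K (zs i)))"
      using G pair by (intro nn_integral_distr measurable_restrict measurable_compose[OF measurable_component_singleton]) auto
    also have "\<dots> = (\<integral>\<^sup>+x. F (\<lambda>i\<in>I. gh (zs i)) x \<partial>PiM I (\<lambda>i. K (zs i)))"
      by (intro nn_integral_cong) (simp add: G_def space_PiM cong: restrict_cong)
    finally show ?thesis ..
  qed
  have "PiM I (\<lambda>_. \<mu>) \<in> space (prob_algebra (PiM I (\<lambda>_. \<mu>)))"
    using \<mu> by (simp add: space_prob_algebra prob_space_PiM)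
  moreover have "(\<lambda>zs. PiM I (\<lambda>i. L (zs i))) \<in> PiM I (\<lambda>_. \<mu>) \<rightarrow>\<^sub>M prob_algebra (PiM I (\<lambda>_. U \<Otimes>\<^sub>M X))"
    using L by (intro measurable_PiM_kernel[OF fin] measurable_compose[OF measurable_component_singleton]) auto
  ultimately have bind: "(\<integral>\<^sup>+zs. \<integral>\<^sup>+w. G w \<partial>PiM I (\<lambda>i. L (zs i)) \<partial>PiM I (\<lambda>_. \<mu>))
      = (\<integral>\<^sup>+w. G w \<partial>(PiM I (\<lambda>_. \<mu>) \<bind> (\<lambda>zs. PiM I (\<lambda>i. L (zs i)))))"
    using G by (intro nn_integral_bind[symmetric]) (auto dest: measurable_prob_algebraD)
  have "(\<integral>\<^sup>+zs. \<integral>\<^sup>+x. F (\<lambda>i\<in>I. gh (zs i)) x \<partial>PiM I (\<lambda>i. K (zs i)) \<partial>PiM I (\<lambda>_. \<mu>))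
      = (\<integral>\<^sup>+zs. \<integral>\<^sup>+w. G w \<partial>PiM I (\<lambda>i. L (zs i)) \<partial>PiM I (\<lambda>_. \<mu>))"
    by (rule nn_integral_cong) (rule inner)
  also have "\<dots> = (\<integral>\<^sup>+w. G w \<partial>PiM I (\<lambda>_. \<mu> \<bind> L))"
    unfolding bind bind_PiM_kernel[OF fin \<mu> L] ..
  finally show ?thesis
    by (simp only: L_def G_def)
qed

lemma nn_integral_vec_law_conditional:
  assumes \<mu>: "prob_space \<mu>" and K1: "K1 \<in> \<mu> \<rightarrow>\<^sub>M prob_algebra X"
    and K2: "K2 \<in> U \<rightarrow>\<^sub>M prob_algebra X" and gh[measurable]: "gh \<in> \<mu> \<rightarrow>\<^sub>M U"
    and cond: "\<And>A B. A \<in> sets X \<Longrightarrow> B \<in> sets U \<Longrightarrow>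
       (\<integral>\<^sup>+z. indicator B (gh z) * emeasure (K1 z) A \<partial>\<mu>) = (\<integral>\<^sup>+z. indicator B (gh z) * emeasure (K2 (gh z)) A \<partial>\<mu>)"
    and F: "(\<lambda>(u, x). F u x) \<in> borel_measurable (vec_space n U \<Otimes>\<^sub>M vec_space n X)"
  shows "(\<integral>\<^sup>+zs. \<integral>\<^sup>+x. F (vmap n gh zs) x \<partial>vec_law n K1 zs \<partial>vec_space n \<mu>)
       = (\<integral>\<^sup>+zs. \<integral>\<^sup>+x. F (vmap n gh zs) x \<partial>vec_law n K2 (vmap n gh zs) \<partial>vec_space n \<mu>)"
proof -
  have K2_gh: "(\<lambda>z. K2 (gh z)) \<in> \<mu> \<rightarrow>\<^sub>M prob_algebra X"
    using measurable_compose[OF gh K2] .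
  have "vec_law n K2 (vmap n gh zs) = vec_law n (\<lambda>z. K2 (gh z)) zs" for zs
    unfolding vec_law_def vmap_def by (rule PiM_cong) auto
  then show ?thesis
    using F unfolding vec_space_def vec_law_def vmap_def
    by (simp add: nn_integral_PiM_kernel_Pair[OF finite_lessThan \<mu> K1 gh]
        nn_integral_PiM_kernel_Pair[OF finite_lessThan \<mu> K2_gh gh] bind_distr_Pair_eq[OF \<mu> K1 K2_gh gh cond])
qed

section \<open>Changing the marginals of an iterated integral\<close>

lemma measurable_integral_section:
  fixes \<phi> :: "'x \<Rightarrow> 'y \<Rightarrow> real"
  assumes "prob_space P" "(\<lambda>(x, y). \<phi> x y) \<in> borel_measurable (P \<Otimes>\<^sub>M Q)"
  shows "(\<lambda>y. \<integral>x. \<phi> x y \<partial>P) \<in> borel_measurable Q"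
proof -
  interpret prob_space P by fact
  have "(\<lambda>(y, x). \<phi> x y) \<in> borel_measurable (Q \<Otimes>\<^sub>M P)"
    using measurable_compose[OF measurable_pair_swap' assms(2)] by (simp add: case_prod_beta')
  then show ?thesis
    by (rule borel_measurable_lebesgue_integral)
qed

lemma nn_integral_eq_integral_enn2real:
  assumes P: "prob_space P" and f: "f \<in> borel_measurable P" and f_le_1: "\<And>x. f x \<le> 1"
  shows "(\<integral>\<^sup>+x. f x \<partial>P) = ennreal (\<integral>x. enn2real (f x) \<partial>P)"
proof -
  have "(\<integral>\<^sup>+x. f x \<partial>P) = (\<integral>\<^sup>+x. ennreal (enn2real (f x)) \<partial>P)"
    using le_less_trans[OF f_le_1 ennreal_one_less_top] by (intro nn_integral_cong) simp
  also have "\<dots> = ennreal (\<integral>x. enn2real (f x) \<partial>P)"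
    using f f_le_1 by (intro nn_integral_eq_integral integrable_bounded[OF P, of _ 1] AE_I2) (auto simp: enn2real_leI)
  finally show ?thesis .
qed

lemma nn_integral_iterated_eq_integral:
  assumes P: "prob_space P" and Q: "prob_space Q"
    and \<Phi>: "(\<lambda>(x, y). \<Phi> x y) \<in> borel_measurable (P \<Otimes>\<^sub>M Q)" and \<Phi>_le_1: "\<And>x y. \<Phi> x y \<le> 1"
  shows "(\<integral>\<^sup>+y. \<integral>\<^sup>+x. \<Phi> x y \<partial>P \<partial>Q) = ennreal (\<integral>y. \<integral>x. enn2real (\<Phi> x y) \<partial>P \<partial>Q)"
proof -
  have \<phi>: "(\<lambda>(x, y). enn2real (\<Phi> x y)) \<in> borel_measurable (P \<Otimes>\<^sub>M Q)"
    using borel_measurable_enn2real[OF \<Phi>] by (simp add: case_prod_beta')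
  have "(\<integral>\<^sup>+y. \<integral>\<^sup>+x. \<Phi> x y \<partial>P \<partial>Q) = (\<integral>\<^sup>+y. ennreal (\<integral>x. enn2real (\<Phi> x y) \<partial>P) \<partial>Q)"
    using measurable_compose[OF measurable_Pair2' \<Phi>] \<Phi>_le_1
    by (intro nn_integral_cong nn_integral_eq_integral_enn2real[OF P]) auto
  also have "\<dots> = ennreal (\<integral>y. \<integral>x. enn2real (\<Phi> x y) \<partial>P \<partial>Q)"
    using measurable_integral_section[OF P \<phi>] integral_unit_interval[OF P] \<Phi>_le_1
    by (intro nn_integral_eq_integral integrable_bounded[OF Q, of _ 1] AE_I2) (auto simp: enn2real_leI)
  finally show ?thesis .
qed

text \<open>Replacing both marginals of an iterated integral costs only the product of the two
  total variation distances, because the second-order difference is integrated against a signed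
  measure of size \<open>dTV Q1 Q2\<close> and is bounded by \<open>dTV P1 P2\<close>.\<close>
lemma iterated_integral_interaction:
  fixes \<phi> :: "'x \<Rightarrow> 'y \<Rightarrow> real"
  assumes P1: "prob_space P1" and P2: "prob_space P2" and sets_P: "sets P2 = sets P1"
    and Q1: "prob_space Q1" and Q2: "prob_space Q2" and sets_Q: "sets Q2 = sets Q1"
    and \<phi>: "(\<lambda>(x, y). \<phi> x y) \<in> borel_measurable (P1 \<Otimes>\<^sub>M Q1)"
    and \<phi>_01: "\<And>x y. 0 \<le> \<phi> x y \<and> \<phi> x y \<le> 1"
  shows "(\<integral>y. \<integral>x. \<phi> x y \<partial>P1 \<partial>Q1) + (\<integral>y. \<integral>x. \<phi> x y \<partial>P2 \<partial>Q2)
       \<le> (\<integral>y. \<integral>x. \<phi> x y \<partial>P2 \<partial>Q1) + (\<integral>y. \<integral>x. \<phi> x y \<partial>P1 \<partial>Q2) + 2 * (dTV P2 P1 * dTV Q1 Q2)"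
proof -
  have \<phi>_m: "(\<lambda>(x, y). \<phi> x y) \<in> borel_measurable (P \<Otimes>\<^sub>M Q)"
    if "sets P = sets P1" "sets Q = sets Q1" for P Q
    using \<phi> by (simp add: measurable_cong_sets[OF sets_pair_measure_cong[OF that] refl])
  define \<psi> where "\<psi> P y = (\<integral>x. \<phi> x y \<partial>P)" for P y
  have \<psi>_m: "\<psi> P \<in> borel_measurable Q"
    if "prob_space P" "sets P = sets P1" "sets Q = sets Q1" for P Q
    unfolding \<psi>_def using measurable_integral_section[OF that(1) \<phi>_m[OF that(2,3)]] .
  have \<psi>_01: "0 \<le> \<psi> P y \<and> \<psi> P y \<le> 1" if "prob_space P" for P y
    unfolding \<psi>_def by (rule integral_unit_interval[OF that]) (rule \<phi>_01)
  define G where "G y = \<psi> P1 y - \<psi> P2 y" for y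
  have G_m: "G \<in> borel_measurable Q1"
    unfolding G_def using \<psi>_m[OF P1 refl refl] \<psi>_m[OF P2 sets_P refl] by measurable
  have G_bound: "- dTV P1 P2 \<le> G y \<and> G y \<le> dTV P1 P2" if "y \<in> space Q1" for y
  proof -
    have "(\<lambda>x. \<phi> x y) \<in> borel_measurable P1"
      using measurable_compose[OF measurable_Pair2'[OF that] \<phi>] by simp
    then have "\<bar>\<psi> P1 y - \<psi> P2 y\<bar> \<le> (1 - 0) * dTV P1 P2"
      unfolding \<psi>_def using \<phi>_01 by (intro abs_integral_diff_le_dTV[OF P1 P2 sets_P]) auto
    then show ?thesis
      unfolding G_def by (simp add: abs_le_iff)
  qed
  have integral_G: "integral\<^sup>L Q G = (\<integral>y. \<psi> P1 y \<partial>Q) - (\<integral>y. \<psi> P2 y \<partial>Q)"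
    if "prob_space Q" "sets Q = sets Q1" for Q
  proof -
    have "integrable Q (\<psi> P)" if "prob_space P" "sets P = sets P1" for P
      using \<psi>_m[OF that \<open>sets Q = sets Q1\<close>] \<psi>_01[OF that(1)]
      by (intro integrable_bounded[OF \<open>prob_space Q\<close>, of _ 1]) auto
    then show ?thesis
      unfolding G_def using P1 P2 sets_P by simp
  qed
  have "\<bar>integral\<^sup>L Q1 G - integral\<^sup>L Q2 G\<bar> \<le> (dTV P1 P2 - - dTV P1 P2) * dTV Q1 Q2"
    by (rule abs_integral_diff_le_dTV[OF Q1 Q2 sets_Q G_m G_bound])
  then show ?thesis
    unfolding integral_G[OF Q1 refl] integral_G[OF Q2 sets_Q] dTV_commute[OF sets_P] \<psi>_def[symmetric]
    by (simp add: abs_le_iff)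
qed

lemma iterated_integral_le_level_plus_dTV:
  fixes \<phi> :: "'x \<Rightarrow> 'y \<Rightarrow> real"
  assumes P: "prob_space P" and R: "prob_space R" and sets_R: "sets R = sets P" and Q: "prob_space Q"
    and \<phi>: "(\<lambda>(x, y). \<phi> x y) \<in> borel_measurable (P \<Otimes>\<^sub>M Q)"
    and \<phi>_01: "\<And>x y. 0 \<le> \<phi> x y \<and> \<phi> x y \<le> 1"
    and level: "\<And>y. y \<in> space Q \<Longrightarrow> (\<integral>x. \<phi> x y \<partial>R) \<le> \<alpha>" and "0 \<le> \<alpha>"
  shows "(\<integral>y. \<integral>x. \<phi> x y \<partial>P \<partial>Q) \<le> \<alpha> + dTV P R"
proof -
  interpret Q: prob_space Q by fact
  have "(\<integral>x. \<phi> x y \<partial>P) \<le> \<alpha> + dTV P R" if "y \<in> space Q" for y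
  proof -
    have "(\<lambda>x. \<phi> x y) \<in> borel_measurable P"
      using measurable_compose[OF measurable_Pair2'[OF that] \<phi>] by simp
    then have "\<bar>(\<integral>x. \<phi> x y \<partial>P) - (\<integral>x. \<phi> x y \<partial>R)\<bar> \<le> (1 - 0) * dTV P R"
      using \<phi>_01 by (intro abs_integral_diff_le_dTV[OF P R sets_R]) auto
    then show ?thesis
      using level[OF that] by (simp add: abs_le_iff)
  qed
  moreover have "integrable Q (\<lambda>y. \<integral>x. \<phi> x y \<partial>P)"
    using measurable_integral_section[OF P \<phi>] integral_unit_interval[OF P] \<phi>_01
    by (intro integrable_bounded[OF Q, of _ 1]) auto
  ultimately show ?thesis
    by (intro Q.integral_le_const AE_I2) auto
qed

lemma measurable_nn_integral_kernel:
  assumes "(\<lambda>((w, x), y). f w x y) \<in> borel_measurable ((W \<Otimes>\<^sub>M X) \<Otimes>\<^sub>M Y)"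
    and "K \<in> W \<rightarrow>\<^sub>M prob_algebra Y"
  shows "(\<lambda>(w, x). \<integral>\<^sup>+y. f w x y \<partial>K w) \<in> borel_measurable (W \<Otimes>\<^sub>M X)"
proof -
  have "(\<lambda>(w, x). K w) \<in> W \<Otimes>\<^sub>M X \<rightarrow>\<^sub>M subprob_algebra Y"
    using measurable_compose[OF measurable_fst measurable_prob_algebraD[OF assms(2)]] by (simp add: case_prod_beta')
  from nn_integral_measurable_subprob_algebra2[OF _ this, of "\<lambda>(w, x) y. f w x y"] show ?thesis
    using assms(1) by (simp add: case_prod_beta')
qed

lemma measurable_nn_integral_kernel2:
  assumes "(\<lambda>((z, x), y). f z x y) \<in> borel_measurable ((Z \<Otimes>\<^sub>M X) \<Otimes>\<^sub>M Y)"
    and P: "P \<in> Z \<rightarrow>\<^sub>M prob_algebra X" and Q: "Q \<in> Z \<rightarrow>\<^sub>M prob_algebra Y"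
  shows "(\<lambda>z. \<integral>\<^sup>+x. \<integral>\<^sup>+y. f z x y \<partial>Q z \<partial>P z) \<in> borel_measurable Z"
  using measurable_nn_integral_kernel[OF assms(1) Q]
  by (rule nn_integral_measurable_subprob_algebra2[OF _ measurable_prob_algebraD[OF P]])

lemma nn_integral_swap_prob:
  assumes "prob_space P" "prob_space Q" "(\<lambda>(x, y). f x y) \<in> borel_measurable (P \<Otimes>\<^sub>M Q)"
  shows "(\<integral>\<^sup>+x. \<integral>\<^sup>+y. f x y \<partial>Q \<partial>P) = (\<integral>\<^sup>+y. \<integral>\<^sup>+x. f x y \<partial>P \<partial>Q)"
proof -
  interpret P: prob_space P by fact
  interpret Q: prob_space Q by fact
  interpret pair_sigma_finite P Q
    by (simp add: pair_sigma_finite_def P.sigma_finite_measure_axioms Q.sigma_finite_measure_axioms)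
  show ?thesis
    by (rule Fubini'[OF assms(3), symmetric])
qed

text \<open>The excess \<open>D\<close> need not be measurable; only its measurable part \<open>max 0 (f - g)\<close> is
  integrated.\<close>
lemma nn_integral_le_add_excess:
  fixes f g D :: "'z \<Rightarrow> real"
  assumes f: "f \<in> borel_measurable Z" and g: "g \<in> borel_measurable Z"
    and g_nonneg: "\<And>z. z \<in> space Z \<Longrightarrow> 0 \<le> g z"
    and excess: "\<And>z. z \<in> space Z \<Longrightarrow> f z \<le> g z + D z"
  shows "(\<integral>\<^sup>+z. ennreal (f z) \<partial>Z) \<le> (\<integral>\<^sup>+z. ennreal (g z) \<partial>Z) + (\<integral>\<^sup>+z. ennreal (D z) \<partial>Z)"
proof -
  define e where "e z = max 0 (f z - g z)" for z
  have e: "e \<in> borel_measurable Z"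
    unfolding e_def using f g by measurable
  have "(\<integral>\<^sup>+z. ennreal (f z) \<partial>Z) \<le> (\<integral>\<^sup>+z. ennreal (g z) + ennreal (e z) \<partial>Z)"
  proof (rule nn_integral_mono)
    fix z assume "z \<in> space Z"
    have "ennreal (f z) \<le> ennreal (g z + e z)"
      by (intro ennreal_leI) (simp add: e_def)
    then show "ennreal (f z) \<le> ennreal (g z) + ennreal (e z)"
      using g_nonneg[OF \<open>z \<in> space Z\<close>] by (simp add: e_def)
  qed
  also have "\<dots> = (\<integral>\<^sup>+z. ennreal (g z) \<partial>Z) + (\<integral>\<^sup>+z. ennreal (e z) \<partial>Z)"
    using g e by (intro nn_integral_add) auto
  also have "\<dots> \<le> (\<integral>\<^sup>+z. ennreal (g z) \<partial>Z) + (\<integral>\<^sup>+z. ennreal (D z) \<partial>Z)"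
  proof (intro add_mono nn_integral_mono order.refl)
    show "ennreal (e z) \<le> ennreal (D z)" if "z \<in> space Z" for z
      using excess[OF that] by (cases "f z \<le> g z") (auto simp: e_def intro!: ennreal_leI)
  qed
  finally show ?thesis .
qed

lemma nn_integral_bound_by_interaction:
  fixes a1 a2 a3 a4 D1 D2 :: "'z \<Rightarrow> real"
  assumes Z: "prob_space Z"
    and meas: "a1 \<in> borel_measurable Z" "a2 \<in> borel_measurable Z" "a3 \<in> borel_measurable Z" "a4 \<in> borel_measurable Z"
    and range: "\<And>z. z \<in> space Z \<Longrightarrow> 0 \<le> a1 z \<and> 0 \<le> a2 z \<and> 0 \<le> a3 z \<and> 0 \<le> a4 z \<and> a4 z \<le> 1"
    and a3_a4: "(\<integral>\<^sup>+z. ennreal (a3 z) \<partial>Z) = (\<integral>\<^sup>+z. ennreal (a4 z) \<partial>Z)"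
    and a2_a4: "(\<integral>\<^sup>+z. ennreal (a2 z) \<partial>Z) = (\<integral>\<^sup>+z. ennreal (a4 z) \<partial>Z)"
    and interaction: "\<And>z. z \<in> space Z \<Longrightarrow> a1 z + a4 z \<le> a2 z + a3 z + 2 * D1 z"
    and level: "\<And>z. z \<in> space Z \<Longrightarrow> a4 z \<le> \<alpha> + D2 z"
    and "0 \<le> \<alpha>"
  shows "(\<integral>\<^sup>+z. ennreal (a1 z) \<partial>Z) \<le> ennreal \<alpha> + 2 * (\<integral>\<^sup>+z. ennreal (D1 z) \<partial>Z) + (\<integral>\<^sup>+z. ennreal (D2 z) \<partial>Z)"
proof -
  interpret Z: prob_space Z by fact
  note meas[measurable]
  define A4 where "A4 = (\<integral>\<^sup>+z. ennreal (a4 z) \<partial>Z)"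
  have "A4 \<le> (\<integral>\<^sup>+z. 1 \<partial>Z)"
    unfolding A4_def using range by (intro nn_integral_mono) auto
  then have A4_finite: "A4 \<noteq> \<infinity>"
    by (auto simp: Z.emeasure_space_1 top_unique)
  have twice: "(\<integral>\<^sup>+z. ennreal (2 * h z) \<partial>Z) = 2 * (\<integral>\<^sup>+z. ennreal (h z) \<partial>Z)"
    if "h \<in> borel_measurable Z" "\<And>z. z \<in> space Z \<Longrightarrow> 0 \<le> h z" for h
    using that by (subst nn_integral_cmult[symmetric]) (auto intro!: nn_integral_cong simp: ennreal_mult')
  have [measurable]: "(\<lambda>z. (a1 z + a4 z) / 2) \<in> borel_measurable Z" "(\<lambda>z. (a2 z + a3 z) / 2) \<in> borel_measurable Z"
    by measurable
  have "(\<integral>\<^sup>+z. ennreal (a1 z) \<partial>Z) + A4 = (\<integral>\<^sup>+z. ennreal (a1 z + a4 z) \<partial>Z)"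
    unfolding A4_def using range by (subst nn_integral_add[symmetric]) (auto intro!: nn_integral_cong)
  also have "\<dots> = 2 * (\<integral>\<^sup>+z. ennreal ((a1 z + a4 z) / 2) \<partial>Z)"
    using range by (subst twice[symmetric]) (simp_all add: add_divide_distrib)
  also have "\<dots> \<le> 2 * ((\<integral>\<^sup>+z. ennreal ((a2 z + a3 z) / 2) \<partial>Z) + (\<integral>\<^sup>+z. ennreal (D1 z) \<partial>Z))"
  proof (intro mult_left_mono nn_integral_le_add_excess)
    show "(a1 z + a4 z) / 2 \<le> (a2 z + a3 z) / 2 + D1 z" if "z \<in> space Z" for z
      using interaction[OF that] by (simp add: field_simps)
  qed (use range in auto)
  also have "\<dots> = (\<integral>\<^sup>+z. ennreal (a2 z + a3 z) \<partial>Z) + 2 * (\<integral>\<^sup>+z. ennreal (D1 z) \<partial>Z)"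
    unfolding distrib_left using range
    by (subst twice[of "\<lambda>z. (a2 z + a3 z) / 2", symmetric]) (simp_all add: add_divide_distrib)
  also have "(\<integral>\<^sup>+z. ennreal (a2 z + a3 z) \<partial>Z) = (\<integral>\<^sup>+z. ennreal (a2 z) \<partial>Z) + (\<integral>\<^sup>+z. ennreal (a3 z) \<partial>Z)"
    using range by (subst nn_integral_add[symmetric]) (auto intro!: nn_integral_cong)
  also have "\<dots> = A4 + A4"
    by (simp add: A4_def a2_a4 a3_a4)
  finally have "(\<integral>\<^sup>+z. ennreal (a1 z) \<partial>Z) \<le> A4 + 2 * (\<integral>\<^sup>+z. ennreal (D1 z) \<partial>Z)"
    using A4_finite by (simp add: add.commute add.left_commute ennreal_add_left_cancel_le)
  moreover have "A4 \<le> (\<integral>\<^sup>+z. ennreal \<alpha> \<partial>Z) + (\<integral>\<^sup>+z. ennreal (D2 z) \<partial>Z)"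
    unfolding A4_def using level \<open>0 \<le> \<alpha>\<close> by (intro nn_integral_le_add_excess) auto
  ultimately show ?thesis
    by (simp add: Z.emeasure_space_1 add_mono ac_simps order_trans)
qed

text \<open>\<open>mean P Q z\<close> is the quantity \<open>a(P, Q)\<close> of the sketch at the top, with the laws taken at
  \<open>z\<close>; the statistic \<open>\<Phi>\<close> sees \<open>z\<close> only through \<open>u z\<close>.\<close>
locale kernel_mean =
  fixes Z :: "'z measure" and U :: "'u measure" and V :: "'v measure"
    and u :: "'z \<Rightarrow> 'u" and \<Phi> :: "'u \<Rightarrow> 'v \<Rightarrow> 'v \<Rightarrow> ennreal"
  assumes prob_Z: "prob_space Z" and measurable_u[measurable]: "u \<in> Z \<rightarrow>\<^sub>M U"
    and measurable_\<Phi>[measurable]: "(\<lambda>((w, x), y). \<Phi> w x y) \<in> borel_measurable ((U \<Otimes>\<^sub>M V) \<Otimes>\<^sub>M V)"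
    and \<Phi>_le_1: "\<And>w x y. \<Phi> w x y \<le> 1"
begin

definition mean :: "('z \<Rightarrow> 'v measure) \<Rightarrow> ('z \<Rightarrow> 'v measure) \<Rightarrow> 'z \<Rightarrow> real" where
  "mean P Q z = (\<integral>y. \<integral>x. enn2real (\<Phi> (u z) x y) \<partial>P z \<partial>Q z)"

lemma measurable_\<Phi>_section:
  assumes "w \<in> space U" "sets P = sets V" "sets Q = sets V"
  shows "(\<lambda>(x, y). \<Phi> w x y) \<in> borel_measurable (P \<Otimes>\<^sub>M Q)"
proof -
  have "(\<lambda>(x, y). ((w, x), y)) \<in> V \<Otimes>\<^sub>M V \<rightarrow>\<^sub>M (U \<Otimes>\<^sub>M V) \<Otimes>\<^sub>M V"
    using assms(1) by measurable
  from measurable_compose[OF this measurable_\<Phi>] show ?thesis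
    by (simp add: case_prod_beta' measurable_cong_sets[OF sets_pair_measure_cong[OF assms(2,3)] refl])
qed

lemma measurable_enn2real_\<Phi>_section:
  "w \<in> space U \<Longrightarrow> sets P = sets V \<Longrightarrow> sets Q = sets V \<Longrightarrow>
    (\<lambda>(x, y). enn2real (\<Phi> w x y)) \<in> borel_measurable (P \<Otimes>\<^sub>M Q)"
  using borel_measurable_enn2real[OF measurable_\<Phi>_section] by (simp add: case_prod_beta')

lemma enn2real_\<Phi>_unit_interval: "0 \<le> enn2real (\<Phi> w x y) \<and> enn2real (\<Phi> w x y) \<le> 1"
  using \<Phi>_le_1[of w x y] by (simp add: enn2real_leI)

lemma
  assumes "P \<in> Z \<rightarrow>\<^sub>M prob_algebra V" "Q \<in> Z \<rightarrow>\<^sub>M prob_algebra V" "z \<in> space Z"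
  shows nn_integral_eq_mean: "(\<integral>\<^sup>+y. \<integral>\<^sup>+x. \<Phi> (u z) x y \<partial>P z \<partial>Q z) = ennreal (mean P Q z)"
    and nn_integral_swap_kernels:
      "(\<integral>\<^sup>+x. \<integral>\<^sup>+y. \<Phi> (u z) x y \<partial>Q z \<partial>P z) = (\<integral>\<^sup>+y. \<integral>\<^sup>+x. \<Phi> (u z) x y \<partial>P z \<partial>Q z)"
    and mean_unit_interval: "0 \<le> mean P Q z \<and> mean P Q z \<le> 1"
proof -
  have laws: "prob_space (P z)" "sets (P z) = sets V" "prob_space (Q z)" "sets (Q z) = sets V"
    using kernel_prob_space[OF assms(1,3)] kernel_prob_space[OF assms(2,3)] by auto
  have u_z: "u z \<in> space U"
    using measurable_space[OF measurable_u assms(3)] .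
  show "(\<integral>\<^sup>+y. \<integral>\<^sup>+x. \<Phi> (u z) x y \<partial>P z \<partial>Q z) = ennreal (mean P Q z)"
    unfolding mean_def using laws \<Phi>_le_1 by (intro nn_integral_iterated_eq_integral measurable_\<Phi>_section u_z)
  show "(\<integral>\<^sup>+x. \<integral>\<^sup>+y. \<Phi> (u z) x y \<partial>Q z \<partial>P z) = (\<integral>\<^sup>+y. \<integral>\<^sup>+x. \<Phi> (u z) x y \<partial>P z \<partial>Q z)"
    using laws by (intro nn_integral_swap_prob measurable_\<Phi>_section u_z)
  show "0 \<le> mean P Q z \<and> mean P Q z \<le> 1"
    unfolding mean_def using laws integral_unit_interval enn2real_\<Phi>_unit_interval
    by (intro integral_unit_interval) blast+
qed

lemma measurable_\<Phi>_yx: "(\<lambda>((w, y), x). \<Phi> w x y) \<in> borel_measurable ((U \<Otimes>\<^sub>M V) \<Otimes>\<^sub>M V)"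
proof -
  have "(\<lambda>p. ((fst (fst p), snd p), snd (fst p))) \<in> (U \<Otimes>\<^sub>M V) \<Otimes>\<^sub>M V \<rightarrow>\<^sub>M (U \<Otimes>\<^sub>M V) \<Otimes>\<^sub>M V"
    by measurable
  from measurable_compose[OF this measurable_\<Phi>] show ?thesis
    by (simp add: case_prod_beta')
qed

lemma measurable_mean:
  assumes "P \<in> Z \<rightarrow>\<^sub>M prob_algebra V" "Q \<in> Z \<rightarrow>\<^sub>M prob_algebra V"
  shows "mean P Q \<in> borel_measurable Z"
proof -
  have "(\<lambda>p. ((u (fst (fst p)), snd (fst p)), snd p)) \<in> (Z \<Otimes>\<^sub>M V) \<Otimes>\<^sub>M V \<rightarrow>\<^sub>M (U \<Otimes>\<^sub>M V) \<Otimes>\<^sub>M V"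
    by measurable
  from measurable_compose[OF this measurable_\<Phi>_yx]
  have "(\<lambda>((z, y), x). \<Phi> (u z) x y) \<in> borel_measurable ((Z \<Otimes>\<^sub>M V) \<Otimes>\<^sub>M V)"
    by (simp add: case_prod_beta')
  from measurable_nn_integral_kernel2[where f="\<lambda>z y x. \<Phi> (u z) x y", OF this assms(2,1)]
  have "(\<lambda>z. \<integral>\<^sup>+y. \<integral>\<^sup>+x. \<Phi> (u z) x y \<partial>P z \<partial>Q z) \<in> borel_measurable Z" .
  from borel_measurable_enn2real[OF this] show ?thesis
    by (rule measurable_cong[THEN iffD1, rotated]) (simp add: nn_integral_eq_mean[OF assms] mean_unit_interval[OF assms])
qed

lemma nn_integral_mean_swap_x:
  assumes KX: "KX \<in> Z \<rightarrow>\<^sub>M prob_algebra V" and RS: "RS \<in> U \<rightarrow>\<^sub>M prob_algebra V"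
    and FY: "FY \<in> U \<rightarrow>\<^sub>M prob_algebra V"
    and swap_x: "\<And>F. (\<lambda>(w, x). F w x) \<in> borel_measurable (U \<Otimes>\<^sub>M V) \<Longrightarrow>
       (\<integral>\<^sup>+z. \<integral>\<^sup>+x. F (u z) x \<partial>KX z \<partial>Z) = (\<integral>\<^sup>+z. \<integral>\<^sup>+x. F (u z) x \<partial>RS (u z) \<partial>Z)"
  shows "(\<integral>\<^sup>+z. ennreal (mean KX (\<lambda>z. FY (u z)) z) \<partial>Z) = (\<integral>\<^sup>+z. ennreal (mean (\<lambda>z. RS (u z)) (\<lambda>z. FY (u z)) z) \<partial>Z)"
proof -
  have RS_u: "(\<lambda>z. RS (u z)) \<in> Z \<rightarrow>\<^sub>M prob_algebra V" and FY_u: "(\<lambda>z. FY (u z)) \<in> Z \<rightarrow>\<^sub>M prob_algebra V"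
    by (intro measurable_compose[OF measurable_u RS] measurable_compose[OF measurable_u FY])+
  have "(\<integral>\<^sup>+z. \<integral>\<^sup>+x. \<integral>\<^sup>+y. \<Phi> (u z) x y \<partial>FY (u z) \<partial>KX z \<partial>Z)
      = (\<integral>\<^sup>+z. \<integral>\<^sup>+x. \<integral>\<^sup>+y. \<Phi> (u z) x y \<partial>FY (u z) \<partial>RS (u z) \<partial>Z)"
    by (rule swap_x[OF measurable_nn_integral_kernel[OF measurable_\<Phi> FY]])
  then show ?thesis
    using nn_integral_swap_kernels[OF KX FY_u] nn_integral_swap_kernels[OF RS_u FY_u]
      nn_integral_eq_mean[OF KX FY_u] nn_integral_eq_mean[OF RS_u FY_u]
    by (metis (no_types, lifting) nn_integral_cong)
qed

lemma nn_integral_mean_swap_y: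
  assumes KY: "KY \<in> Z \<rightarrow>\<^sub>M prob_algebra V" and RS: "RS \<in> U \<rightarrow>\<^sub>M prob_algebra V"
    and FY: "FY \<in> U \<rightarrow>\<^sub>M prob_algebra V"
    and swap_y: "\<And>F. (\<lambda>(w, y). F w y) \<in> borel_measurable (U \<Otimes>\<^sub>M V) \<Longrightarrow>
       (\<integral>\<^sup>+z. \<integral>\<^sup>+y. F (u z) y \<partial>KY z \<partial>Z) = (\<integral>\<^sup>+z. \<integral>\<^sup>+y. F (u z) y \<partial>FY (u z) \<partial>Z)"
  shows "(\<integral>\<^sup>+z. ennreal (mean (\<lambda>z. RS (u z)) KY z) \<partial>Z) = (\<integral>\<^sup>+z. ennreal (mean (\<lambda>z. RS (u z)) (\<lambda>z. FY (u z)) z) \<partial>Z)"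
proof -
  have RS_u: "(\<lambda>z. RS (u z)) \<in> Z \<rightarrow>\<^sub>M prob_algebra V" and FY_u: "(\<lambda>z. FY (u z)) \<in> Z \<rightarrow>\<^sub>M prob_algebra V"
    by (intro measurable_compose[OF measurable_u RS] measurable_compose[OF measurable_u FY])+
  have "(\<integral>\<^sup>+z. \<integral>\<^sup>+y. \<integral>\<^sup>+x. \<Phi> (u z) x y \<partial>RS (u z) \<partial>KY z \<partial>Z)
      = (\<integral>\<^sup>+z. \<integral>\<^sup>+y. \<integral>\<^sup>+x. \<Phi> (u z) x y \<partial>RS (u z) \<partial>FY (u z) \<partial>Z)"
    by (rule swap_y[OF measurable_nn_integral_kernel[OF measurable_\<Phi>_yx RS]])
  then show ?thesis
    using nn_integral_eq_mean[OF RS_u KY] nn_integral_eq_mean[OF RS_u FY_u]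
    by (metis (no_types, lifting) nn_integral_cong)
qed

lemma mean_interaction:
  assumes "P1 \<in> Z \<rightarrow>\<^sub>M prob_algebra V" "P2 \<in> Z \<rightarrow>\<^sub>M prob_algebra V"
    and "Q1 \<in> Z \<rightarrow>\<^sub>M prob_algebra V" "Q2 \<in> Z \<rightarrow>\<^sub>M prob_algebra V" and z: "z \<in> space Z"
  shows "mean P1 Q1 z + mean P2 Q2 z \<le> mean P2 Q1 z + mean P1 Q2 z + 2 * (dTV (P2 z) (P1 z) * dTV (Q1 z) (Q2 z))"
  unfolding mean_def
  using kernel_prob_space[OF assms(1) z] kernel_prob_space[OF assms(2) z] kernel_prob_space[OF assms(3) z]
    kernel_prob_space[OF assms(4) z] measurable_space[OF measurable_u z]
  by (intro iterated_integral_interaction measurable_enn2real_\<Phi>_section enn2real_\<Phi>_unit_interval) auto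

lemma mean_le_level_plus_dTV:
  assumes P: "P \<in> U \<rightarrow>\<^sub>M prob_algebra V" and R: "R \<in> U \<rightarrow>\<^sub>M prob_algebra V"
    and Q: "Q \<in> U \<rightarrow>\<^sub>M prob_algebra V" and z: "z \<in> space Z"
    and level: "\<And>w y. w \<in> space U \<Longrightarrow> y \<in> space V \<Longrightarrow> (\<integral>\<^sup>+x. \<Phi> w x y \<partial>R w) \<le> ennreal \<alpha>"
    and "0 \<le> \<alpha>"
  shows "mean (\<lambda>z. P (u z)) (\<lambda>z. Q (u z)) z \<le> \<alpha> + dTV (P (u z)) (R (u z))"
proof -
  have u_z: "u z \<in> space U"
    using measurable_space[OF measurable_u z] .
  note laws = kernel_prob_space[OF P u_z] kernel_prob_space[OF R u_z] kernel_prob_space[OF Q u_z]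
  have "(\<integral>x. enn2real (\<Phi> (u z) x y) \<partial>R (u z)) \<le> \<alpha>" if "y \<in> space (Q (u z))" for y
  proof -
    have y: "y \<in> space V"
      using that sets_eq_imp_space_eq[of "Q (u z)" V] laws by simp
    have "(\<lambda>x. \<Phi> (u z) x y) \<in> borel_measurable (R (u z))"
      using measurable_compose[OF measurable_Pair2'[OF y] measurable_\<Phi>_section[OF u_z _ refl]] laws by simp
    then have "(\<integral>\<^sup>+x. \<Phi> (u z) x y \<partial>R (u z)) = ennreal (\<integral>x. enn2real (\<Phi> (u z) x y) \<partial>R (u z))"
      using laws \<Phi>_le_1 by (intro nn_integral_eq_integral_enn2real) auto
    then show ?thesis
      using level[OF u_z y] \<open>0 \<le> \<alpha>\<close> by simp
  qed
  then show ?thesis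
    unfolding mean_def using laws u_z enn2real_\<Phi>_unit_interval \<open>0 \<le> \<alpha>\<close>
    by (intro iterated_integral_le_level_plus_dTV measurable_enn2real_\<Phi>_section) auto
qed

theorem resampling_test_size_bound:
  assumes KX: "KX \<in> Z \<rightarrow>\<^sub>M prob_algebra V" and KY: "KY \<in> Z \<rightarrow>\<^sub>M prob_algebra V"
    and RS: "RS \<in> U \<rightarrow>\<^sub>M prob_algebra V" and FY: "FY \<in> U \<rightarrow>\<^sub>M prob_algebra V"
    and R: "R \<in> U \<rightarrow>\<^sub>M prob_algebra V"
    and level: "\<And>w y. w \<in> space U \<Longrightarrow> y \<in> space V \<Longrightarrow> (\<integral>\<^sup>+x. \<Phi> w x y \<partial>R w) \<le> ennreal \<alpha>"
    and swap_x: "\<And>F. (\<lambda>(w, x). F w x) \<in> borel_measurable (U \<Otimes>\<^sub>M V) \<Longrightarrow>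
       (\<integral>\<^sup>+z. \<integral>\<^sup>+x. F (u z) x \<partial>KX z \<partial>Z) = (\<integral>\<^sup>+z. \<integral>\<^sup>+x. F (u z) x \<partial>RS (u z) \<partial>Z)"
    and swap_y: "\<And>F. (\<lambda>(w, y). F w y) \<in> borel_measurable (U \<Otimes>\<^sub>M V) \<Longrightarrow>
       (\<integral>\<^sup>+z. \<integral>\<^sup>+y. F (u z) y \<partial>KY z \<partial>Z) = (\<integral>\<^sup>+z. \<integral>\<^sup>+y. F (u z) y \<partial>FY (u z) \<partial>Z)"
    and \<alpha>: "0 \<le> \<alpha>"
  shows "(\<integral>\<^sup>+z. \<integral>\<^sup>+x. \<integral>\<^sup>+y. \<Phi> (u z) x y \<partial>KY z \<partial>KX z \<partial>Z)
    \<le> ennreal \<alpha> + 2 * (\<integral>\<^sup>+z. ennreal (dTV (RS (u z)) (KX z) * dTV (KY z) (FY (u z))) \<partial>Z)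
      + (\<integral>\<^sup>+z. ennreal (dTV (RS (u z)) (R (u z))) \<partial>Z)"
proof -
  have RS_u: "(\<lambda>z. RS (u z)) \<in> Z \<rightarrow>\<^sub>M prob_algebra V" and FY_u: "(\<lambda>z. FY (u z)) \<in> Z \<rightarrow>\<^sub>M prob_algebra V"
    by (intro measurable_compose[OF measurable_u RS] measurable_compose[OF measurable_u FY])+
  have "(\<integral>\<^sup>+z. \<integral>\<^sup>+x. \<integral>\<^sup>+y. \<Phi> (u z) x y \<partial>KY z \<partial>KX z \<partial>Z) = (\<integral>\<^sup>+z. ennreal (mean KX KY z) \<partial>Z)"
    using nn_integral_swap_kernels[OF KX KY] nn_integral_eq_mean[OF KX KY] by (metis (no_types, lifting) nn_integral_cong)
  also have "\<dots> \<le> ennreal \<alpha> + 2 * (\<integral>\<^sup>+z. ennreal (dTV (RS (u z)) (KX z) * dTV (KY z) (FY (u z))) \<partial>Z)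
      + (\<integral>\<^sup>+z. ennreal (dTV (RS (u z)) (R (u z))) \<partial>Z)"
    by (rule nn_integral_bound_by_interaction[OF prob_Z measurable_mean[OF KX KY] measurable_mean[OF RS_u KY]
          measurable_mean[OF KX FY_u] measurable_mean[OF RS_u FY_u] _
          nn_integral_mean_swap_x[OF KX RS FY swap_x] nn_integral_mean_swap_y[OF KY RS FY swap_y]
          mean_interaction[OF KX RS_u KY FY_u] mean_le_level_plus_dTV[OF RS R FY _ level \<alpha>] \<alpha>])
       (use mean_unit_interval KX KY RS_u FY_u measurable_space[OF measurable_u] in auto)
  finally show ?thesis .
qed

end

section \<open>The Maxway test\<close>

definition maxway_rejection_prob ::
  "nat \<Rightarrow> nat \<Rightarrow> ((nat \<Rightarrow> real) \<Rightarrow> (nat \<Rightarrow> real) \<Rightarrow> (nat \<Rightarrow> 'g) \<Rightarrow> (nat \<Rightarrow> 'h) \<Rightarrow> real)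
   \<Rightarrow> ('g \<times> 'h \<Rightarrow> real measure) \<Rightarrow> real \<Rightarrow> (nat \<Rightarrow> 'g \<times> 'h) \<Rightarrow> (nat \<Rightarrow> real) \<Rightarrow> (nat \<Rightarrow> real) \<Rightarrow> ennreal"
  where "maxway_rejection_prob n M T rho \<alpha> u x y =
    (\<integral>\<^sup>+d. indicator {d. p_maxway M T y x (vmap n fst u) (vmap n snd u) d \<le> \<alpha>} d
      \<partial>PiM {..<M} (\<lambda>_. vec_law n rho u))"

lemma measurable_vmap:
  "f \<in> M \<rightarrow>\<^sub>M N \<Longrightarrow> vmap n f \<in> vec_space n M \<rightarrow>\<^sub>M vec_space n N"
  unfolding vmap_def vec_space_def
  by (intro measurable_restrict measurable_compose[OF measurable_component_singleton]) auto

lemma vmap_comp: "vmap n (\<lambda>z. f (g z)) zs = vmap n f (vmap n g zs)"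
  by (auto simp: vmap_def)

lemma vec_law_comp: "vec_law n (\<lambda>z. K (f z)) zs = vec_law n K (vmap n f zs)"
  unfolding vec_law_def vmap_def by (rule PiM_cong) auto

lemma prob_space_vec_law:
  fixes K :: "'a::topological_space \<Rightarrow> 'b measure"
  assumes "K \<in> borel \<rightarrow>\<^sub>M prob_algebra N"
  shows "prob_space (vec_law n K u) \<and> sets (vec_law n K u) = sets (vec_space n N)"
  using kernel_prob_space[OF assms] unfolding vec_law_def vec_space_def
  by (auto intro!: prob_space_PiM sets_PiM_cong)

lemma measurable_vec_law:
  "K \<in> M \<rightarrow>\<^sub>M prob_algebra N \<Longrightarrow> vec_law n K \<in> vec_space n M \<rightarrow>\<^sub>M prob_algebra (vec_space n N)"
  unfolding vec_law_def vec_space_def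
  by (intro measurable_PiM_kernel measurable_compose[OF measurable_component_singleton]) auto

lemma measurable_p_maxway:
  fixes T :: "(nat \<Rightarrow> real) \<Rightarrow> (nat \<Rightarrow> real) \<Rightarrow> (nat \<Rightarrow> 'g::topological_space) \<Rightarrow> (nat \<Rightarrow> 'h::topological_space) \<Rightarrow> real"
  assumes T: "(\<lambda>(y, a, u, v). T y a u v) \<in> borel_measurable
       (vec_space n borel \<Otimes>\<^sub>M vec_space n borel \<Otimes>\<^sub>M vec_space n borel \<Otimes>\<^sub>M vec_space n borel)"
    and y: "y \<in> N \<rightarrow>\<^sub>M vec_space n borel" and x: "x \<in> N \<rightarrow>\<^sub>M vec_space n borel"
    and gZ: "gZ \<in> N \<rightarrow>\<^sub>M vec_space n borel" and hZ: "hZ \<in> N \<rightarrow>\<^sub>M vec_space n borel"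
    and d: "d \<in> N \<rightarrow>\<^sub>M PiM {..<M} (\<lambda>_. vec_space n borel)"
  shows "(\<lambda>w. p_maxway M T (y w) (x w) (gZ w) (hZ w) (d w)) \<in> borel_measurable N"
proof -
  have T_comp: "(\<lambda>w. T (y w) (a w) (gZ w) (hZ w)) \<in> borel_measurable N"
    if "a \<in> N \<rightarrow>\<^sub>M vec_space n borel" for a
    using measurable_compose[OF measurable_Pair[OF y measurable_Pair[OF that measurable_Pair[OF gZ hZ]]] T]
    by simp
  have [measurable]: "(\<lambda>w. T (y w) (x w) (gZ w) (hZ w)) \<in> borel_measurable N"
    by (rule T_comp[OF x])
  have [measurable]: "(\<lambda>w. T (y w) (d w m) (gZ w) (hZ w)) \<in> borel_measurable N" if "m \<in> {..<M}" for m
    using that by (intro T_comp measurable_compose[OF d measurable_component_singleton]) auto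
  have "(\<lambda>w. \<Sum>m\<in>{..<M}. if T (y w) (x w) (gZ w) (hZ w) \<le> T (y w) (d w m) (gZ w) (hZ w) then 1 else 0 :: real)
      \<in> borel_measurable N"
    by measurable
  moreover have "p_maxway M T (y w) (x w) (gZ w) (hZ w) (d w)
      = (1 + (\<Sum>m\<in>{..<M}. if T (y w) (x w) (gZ w) (hZ w) \<le> T (y w) (d w m) (gZ w) (hZ w) then 1 else 0)) / (real M + 1)"
    for w
    by (simp add: p_maxway_def sum.If_cases Int_def)
  ultimately show ?thesis
    by simp
qed

lemma measurable_maxway_rejection_prob:
  fixes T :: "(nat \<Rightarrow> real) \<Rightarrow> (nat \<Rightarrow> real) \<Rightarrow> (nat \<Rightarrow> 'g::topological_space) \<Rightarrow> (nat \<Rightarrow> 'h::topological_space) \<Rightarrow> real"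
  assumes T: "(\<lambda>(y, a, u, v). T y a u v) \<in> borel_measurable
       (vec_space n borel \<Otimes>\<^sub>M vec_space n borel \<Otimes>\<^sub>M vec_space n borel \<Otimes>\<^sub>M vec_space n borel)"
    and rho: "rho \<in> borel \<rightarrow>\<^sub>M prob_algebra borel"
  shows "(\<lambda>((u, x), y). maxway_rejection_prob n M T rho \<alpha> u x y)
    \<in> borel_measurable ((vec_space n borel \<Otimes>\<^sub>M vec_space n borel) \<Otimes>\<^sub>M vec_space n borel)"
proof -
  let ?W = "(vec_space n (borel :: ('g \<times> 'h) measure) \<Otimes>\<^sub>M vec_space n borel) \<Otimes>\<^sub>M vec_space n (borel :: real measure)"
  let ?D = "PiM {..<M} (\<lambda>_. vec_space n (borel :: real measure))"
  have fst: "fst \<in> (borel :: ('g \<times> 'h) measure) \<rightarrow>\<^sub>M borel" and snd: "snd \<in> (borel :: ('g \<times> 'h) measure) \<rightarrow>\<^sub>M borel"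
    by (intro borel_measurable_continuous_onI continuous_on_fst continuous_on_snd continuous_on_id)+
  have [measurable]: "(\<lambda>p. p_maxway M T (snd (fst p)) (snd (fst (fst p))) (vmap n fst (fst (fst (fst p))))
      (vmap n snd (fst (fst (fst p)))) (snd p)) \<in> borel_measurable (?W \<Otimes>\<^sub>M ?D)"
  proof (rule measurable_p_maxway[OF T])
    have W_fst: "(\<lambda>p. fst (fst (fst p))) \<in> ?W \<Otimes>\<^sub>M ?D \<rightarrow>\<^sub>M vec_space n borel"
      by (intro measurable_compose[OF measurable_fst] measurable_fst)
    show "(\<lambda>p. vmap n fst (fst (fst (fst p)))) \<in> ?W \<Otimes>\<^sub>M ?D \<rightarrow>\<^sub>M vec_space n borel"
      "(\<lambda>p. vmap n snd (fst (fst (fst p)))) \<in> ?W \<Otimes>\<^sub>M ?D \<rightarrow>\<^sub>M vec_space n borel"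
      by (intro measurable_compose[OF W_fst] measurable_vmap fst snd)+
    show "(\<lambda>p. snd (fst p)) \<in> ?W \<Otimes>\<^sub>M ?D \<rightarrow>\<^sub>M vec_space n borel"
      "(\<lambda>p. snd (fst (fst p))) \<in> ?W \<Otimes>\<^sub>M ?D \<rightarrow>\<^sub>M vec_space n borel"
      "snd \<in> ?W \<Otimes>\<^sub>M ?D \<rightarrow>\<^sub>M ?D"
      by (intro measurable_compose[OF measurable_fst] measurable_snd)+
  qed
  have "(\<lambda>p. indicator {d. p_maxway M T (snd (fst p)) (snd (fst (fst p))) (vmap n fst (fst (fst (fst p))))
      (vmap n snd (fst (fst (fst p)))) d \<le> \<alpha>} (snd p) :: ennreal) \<in> borel_measurable (?W \<Otimes>\<^sub>M ?D)"
    by measurable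
  moreover have "(\<lambda>w. PiM {..<M} (\<lambda>_. vec_law n rho (fst (fst w)))) \<in> ?W \<rightarrow>\<^sub>M subprob_algebra ?D"
    using measurable_PiM_kernel[OF finite_lessThan measurable_vec_law[OF rho]]
    by (intro measurable_prob_algebraD measurable_compose[OF measurable_compose[OF measurable_fst measurable_fst]]) auto
  ultimately have "(\<lambda>w. \<integral>\<^sup>+d. indicator {d. p_maxway M T (snd w) (snd (fst w)) (vmap n fst (fst (fst w)))
      (vmap n snd (fst (fst w))) d \<le> \<alpha>} d \<partial>PiM {..<M} (\<lambda>_. vec_law n rho (fst (fst w)))) \<in> borel_measurable ?W"
    by (intro nn_integral_measurable_subprob_algebra2[where f="\<lambda>w d. indicator {d. p_maxway M T (snd w) (snd (fst w))
          (vmap n fst (fst (fst w))) (vmap n snd (fst (fst w))) d \<le> \<alpha>} d"]) (simp_all add: case_prod_beta')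
  then show ?thesis
    unfolding maxway_rejection_prob_def by (simp add: case_prod_beta')
qed

lemma maxway_rejection_prob_level:
  fixes T :: "(nat \<Rightarrow> real) \<Rightarrow> (nat \<Rightarrow> real) \<Rightarrow> (nat \<Rightarrow> 'g::topological_space) \<Rightarrow> (nat \<Rightarrow> 'h::topological_space) \<Rightarrow> real"
  assumes T: "(\<lambda>(y, a, u, v). T y a u v) \<in> borel_measurable
       (vec_space n borel \<Otimes>\<^sub>M vec_space n borel \<Otimes>\<^sub>M vec_space n borel \<Otimes>\<^sub>M vec_space n borel)"
    and rho: "rho \<in> borel \<rightarrow>\<^sub>M prob_algebra borel" and y: "y \<in> space (vec_space n borel)" and "0 \<le> \<alpha>"
  shows "(\<integral>\<^sup>+x. maxway_rejection_prob n M T rho \<alpha> u x y \<partial>vec_law n rho u) \<le> ennreal \<alpha>"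
proof -
  define t where "t = (\<lambda>a. T y a (vmap n fst u) (vmap n snd u))"
  have law: "prob_space (vec_law n rho u) \<and> sets (vec_law n rho u) = sets (vec_space n borel)"
    by (rule prob_space_vec_law[OF rho])
  have "(\<lambda>a. (y, a, vmap n fst u, vmap n snd u))
      \<in> vec_space n borel \<rightarrow>\<^sub>M vec_space n borel \<Otimes>\<^sub>M vec_space n borel \<Otimes>\<^sub>M vec_space n borel \<Otimes>\<^sub>M vec_space n borel"
    using y by (intro measurable_Pair measurable_const measurable_ident) (auto simp: vmap_def vec_space_def space_PiM)
  from measurable_compose[OF this T] have "t \<in> borel_measurable (vec_space n borel)"
    by (simp add: t_def)
  then have t: "t \<in> borel_measurable (vec_law n rho u)"
    by (simp add: measurable_cong_sets[OF law[THEN conjunct2] refl])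
  have "maxway_rejection_prob n M T rho \<alpha> u x y
      = (\<integral>\<^sup>+d. indicator {d. 1 + real (card {m\<in>{..<M}. t x \<le> t (d m)}) \<le> \<alpha> * (real M + 1)} d
          \<partial>PiM {..<M} (\<lambda>_. vec_law n rho u))" for x
    by (simp add: maxway_rejection_prob_def p_maxway_def t_def pos_divide_le_eq)
  then have "(\<integral>\<^sup>+x. maxway_rejection_prob n M T rho \<alpha> u x y \<partial>vec_law n rho u) \<le> ennreal (\<alpha> * (real M + 1) / (real M + 1))"
    using rank_test_valid[OF law[THEN conjunct1] t, of "\<alpha> * (real M + 1)" M] \<open>0 \<le> \<alpha>\<close> by simp
  then show ?thesis
    by simp
qed

lemma maxway_rejection_prob_le_1:
  assumes "rho \<in> borel \<rightarrow>\<^sub>M prob_algebra borel"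
  shows "maxway_rejection_prob n M T rho \<alpha> u x y \<le> 1"
proof -
  interpret prob_space "PiM {..<M} (\<lambda>_. vec_law n rho u)"
    using prob_space_vec_law[OF assms] by (intro prob_space_PiM) blast
  have "maxway_rejection_prob n M T rho \<alpha> u x y \<le> (\<integral>\<^sup>+d. 1 \<partial>PiM {..<M} (\<lambda>_. vec_law n rho u))"
    unfolding maxway_rejection_prob_def by (intro nn_integral_mono) (simp add: indicator_def)
  then show ?thesis
    by (simp add: emeasure_space_1)
qed

theorem theorem2:
  fixes n M :: nat and \<alpha> :: real
    and \<mu> :: "(real ^ 'p) measure"
    and kx ky :: "real ^ 'p \<Rightarrow> real measure"
    and g :: "real ^ 'p \<Rightarrow> 'g::euclidean_space"
    and h :: "real ^ 'p \<Rightarrow> 'h::euclidean_space"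
    and rho_star rho fy_gh :: "'g \<times> 'h \<Rightarrow> real measure"
    and T :: "(nat \<Rightarrow> real) \<Rightarrow> (nat \<Rightarrow> real) \<Rightarrow> (nat \<Rightarrow> 'g) \<Rightarrow> (nat \<Rightarrow> 'h) \<Rightarrow> real"
  assumes mu: "prob_space \<mu>" "sets \<mu> = sets borel"
    and kx: "kx \<in> borel \<rightarrow>\<^sub>M prob_algebra borel"
    and ky: "ky \<in> borel \<rightarrow>\<^sub>M prob_algebra borel"
    and g: "g \<in> borel_measurable borel" and h: "h \<in> borel_measurable borel"
    and rho_star: "rho_star \<in> borel \<rightarrow>\<^sub>M prob_algebra borel"
    and rho: "rho \<in> borel \<rightarrow>\<^sub>M prob_algebra borel"
    and fy_gh: "fy_gh \<in> borel \<rightarrow>\<^sub>M prob_algebra borel"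
    and rho_star_cond: "\<And>A B. A \<in> sets borel \<Longrightarrow> B \<in> sets borel \<Longrightarrow>
       (\<integral>\<^sup>+ z. indicator B (g z, h z) * emeasure (kx z) A \<partial>\<mu>)
         = (\<integral>\<^sup>+ z. indicator B (g z, h z) * emeasure (rho_star (g z, h z)) A \<partial>\<mu>)"
    and fy_gh_cond: "\<And>A B. A \<in> sets borel \<Longrightarrow> B \<in> sets borel \<Longrightarrow>
       (\<integral>\<^sup>+ z. indicator B (g z, h z) * emeasure (ky z) A \<partial>\<mu>)
         = (\<integral>\<^sup>+ z. indicator B (g z, h z) * emeasure (fy_gh (g z, h z)) A \<partial>\<mu>)"
    and T_meas: "(\<lambda>(y, a, u, v). T y a u v) \<in> borel_measurable
       (vec_space n borel \<Otimes>\<^sub>M vec_space n borel \<Otimes>\<^sub>M vec_space n borel \<Otimes>\<^sub>M vec_space n borel)"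
    and cont_star: "AE zs in vec_space n \<mu>. AE y in vec_law n ky zs.
       atomless (distr (vec_law n (\<lambda>z. rho_star (g z, h z)) zs) borel
                   (\<lambda>a. T y a (vmap n g zs) (vmap n h zs)))"
    and cont_xZ: "AE zs in vec_space n \<mu>. AE y in vec_law n ky zs.
       atomless (distr (vec_law n kx zs) borel (\<lambda>a. T y a (vmap n g zs) (vmap n h zs)))"
    and M: "M \<ge> 1" and alpha: "0 < \<alpha>" "\<alpha> < 1"
  shows
   "(\<integral>\<^sup>+ zs. \<integral>\<^sup>+ x. \<integral>\<^sup>+ y. \<integral>\<^sup>+ draws.
        indicator {d. p_maxway M T y x (vmap n g zs) (vmap n h zs) d \<le> \<alpha>} draws
      \<partial>(PiM {..<M} (\<lambda>_. vec_law n (\<lambda>z. rho (g z, h z)) zs))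
      \<partial>(vec_law n ky zs) \<partial>(vec_law n kx zs) \<partial>(vec_space n \<mu>))
    \<le> ennreal \<alpha>
      + 2 * (\<integral>\<^sup>+ zs. ennreal (dTV (vec_law n (\<lambda>z. rho_star (g z, h z)) zs) (vec_law n kx zs)
                        * dTV (vec_law n ky zs) (vec_law n (\<lambda>z. fy_gh (g z, h z)) zs)) \<partial>(vec_space n \<mu>))
      + (\<integral>\<^sup>+ zs. ennreal (dTV (vec_law n (\<lambda>z. rho_star (g z, h z)) zs)
                              (vec_law n (\<lambda>z. rho (g z, h z)) zs)) \<partial>(vec_space n \<mu>))"
proof -
  define gh where "gh z = (g z, h z)" for z
  have kernel_\<mu>: "K \<in> \<mu> \<rightarrow>\<^sub>M prob_algebra borel" if "K \<in> borel \<rightarrow>\<^sub>M prob_algebra borel" for K :: "_ \<Rightarrow> real measure"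
    using that by (simp add: measurable_cong_sets[OF mu(2) refl])
  have gh: "gh \<in> \<mu> \<rightarrow>\<^sub>M borel"
    unfolding gh_def using g h by (simp add: measurable_cong_sets[OF mu(2) refl])
  have "prob_space (vec_space n \<mu>)"
    unfolding vec_space_def by (rule prob_space_PiM) (rule mu(1))
  then interpret kernel_mean "vec_space n \<mu>" "vec_space n borel" "vec_space n borel" "vmap n gh"
    "maxway_rejection_prob n M T rho \<alpha>"
    by (rule kernel_mean.intro[OF _ measurable_vmap[OF gh] measurable_maxway_rejection_prob[OF T_meas rho]
          maxway_rejection_prob_le_1[OF rho]])
  have laws: "vec_law n (\<lambda>z. K (g z, h z)) zs = vec_law n K (vmap n gh zs)" for K :: "_ \<Rightarrow> real measure" and zs
    unfolding gh_def by (rule vec_law_comp)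
  have "vmap n g zs = vmap n fst (vmap n gh zs)" "vmap n h zs = vmap n snd (vmap n gh zs)" for zs
    unfolding gh_def by (simp_all add: vmap_comp[symmetric])
  then have "(\<integral>\<^sup>+ zs. \<integral>\<^sup>+ x. \<integral>\<^sup>+ y. \<integral>\<^sup>+ draws.
        indicator {d. p_maxway M T y x (vmap n g zs) (vmap n h zs) d \<le> \<alpha>} draws
      \<partial>(PiM {..<M} (\<lambda>_. vec_law n (\<lambda>z. rho (g z, h z)) zs))
      \<partial>(vec_law n ky zs) \<partial>(vec_law n kx zs) \<partial>(vec_space n \<mu>))
    = (\<integral>\<^sup>+ zs. \<integral>\<^sup>+ x. \<integral>\<^sup>+ y. maxway_rejection_prob n M T rho \<alpha> (vmap n gh zs) x y
      \<partial>(vec_law n ky zs) \<partial>(vec_law n kx zs) \<partial>(vec_space n \<mu>))"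
    by (simp add: maxway_rejection_prob_def laws)
  also have "\<dots> \<le> ennreal \<alpha>
      + 2 * (\<integral>\<^sup>+ zs. ennreal (dTV (vec_law n rho_star (vmap n gh zs)) (vec_law n kx zs)
                        * dTV (vec_law n ky zs) (vec_law n fy_gh (vmap n gh zs))) \<partial>(vec_space n \<mu>))
      + (\<integral>\<^sup>+ zs. ennreal (dTV (vec_law n rho_star (vmap n gh zs)) (vec_law n rho (vmap n gh zs))) \<partial>(vec_space n \<mu>))"
  proof (rule resampling_test_size_bound[OF measurable_vec_law[OF kernel_\<mu>[OF kx]]
        measurable_vec_law[OF kernel_\<mu>[OF ky]] measurable_vec_law[OF rho_star]
        measurable_vec_law[OF fy_gh] measurable_vec_law[OF rho]])
    show "(\<integral>\<^sup>+x. maxway_rejection_prob n M T rho \<alpha> w x y \<partial>vec_law n rho w) \<le> ennreal \<alpha>"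
      if "y \<in> space (vec_space n borel)" for w y
      using maxway_rejection_prob_level[OF T_meas rho that] alpha by simp
    show "(\<integral>\<^sup>+zs. \<integral>\<^sup>+x. F (vmap n gh zs) x \<partial>vec_law n kx zs \<partial>vec_space n \<mu>)
      = (\<integral>\<^sup>+zs. \<integral>\<^sup>+x. F (vmap n gh zs) x \<partial>vec_law n rho_star (vmap n gh zs) \<partial>vec_space n \<mu>)"
      if "(\<lambda>(w, x). F w x) \<in> borel_measurable (vec_space n borel \<Otimes>\<^sub>M vec_space n borel)" for F
      using rho_star_cond
      by (intro nn_integral_vec_law_conditional[OF mu(1) kernel_\<mu>[OF kx] rho_star gh _ that]) (simp add: gh_def)
    show "(\<integral>\<^sup>+zs. \<integral>\<^sup>+y. F (vmap n gh zs) y \<partial>vec_law n ky zs \<partial>vec_space n \<mu>)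
      = (\<integral>\<^sup>+zs. \<integral>\<^sup>+y. F (vmap n gh zs) y \<partial>vec_law n fy_gh (vmap n gh zs) \<partial>vec_space n \<mu>)"
      if "(\<lambda>(w, y). F w y) \<in> borel_measurable (vec_space n borel \<Otimes>\<^sub>M vec_space n borel)" for F
      using fy_gh_cond
      by (intro nn_integral_vec_law_conditional[OF mu(1) kernel_\<mu>[OF ky] fy_gh gh _ that]) (simp add: gh_def)
  qed (use alpha in simp)
  finally show ?thesis
    by (simp add: laws)
qed

end
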